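(* Let $A\in\mathbb{R}^{m\times n}$, $c\in\mathbb{R}^n$, $\lambda>0$, let $h:\mathbb{R}^m\to\mathbb{R}$ be convex and twice continuously differentiable, and let $p:\mathbb{R}^n\to(-\infty,+\infty]$ be closed, proper and convex. Consider $$\min_{x\in\mathbb{R}^n}\ f(x):=h(Ax)-\langle c,x\rangle+\lambda p(x),$$ and assume its optimal solution set $\Omega$ is nonempty and compact. Fix $\tau>0$, a nondecreasing sequence of positive numbers $\sigma_k\uparrow\sigma_\infty\le\infty$, and summable nonnegative sequences $\{\epsilon_k\}_{k\ge0}$, $\{\delta_k\}_{k\ge0}$ with $\delta_k<1$ for all $k$. For $k\ge 0$ define $$f_k(x):=h(Ax)-\langle c,x\rangle+\lambda p(x)+\frac{1}{2\sigma_k}\|x-x^k\|^2+\frac{\tau}{2\sigma_k}\|Ax-Ax^k\|^2,$$ $$\psi_k(u):=-\frac{\tau}{2\sigma_k}\Big\|Ax^k+\frac{\sigma_k}{\tau}u\Big\|^2+\frac{\tau}{\sigma_k}\mathrm{E}_{\sigma_k h/\tau}\Big(Ax^k+\frac{\sigma_k}{\tau}u\Big)+\frac{\tau}{2\sigma_k}\|Ax^k\|^2-\frac{1}{2\sigma_k}\|x^k+\sigma_k c-\sigma_kA^Tu\|^2+\frac{1}{\sigma_k}\mathrm{E}_{\sigma_k\lambda p}(x^k+\sigma_k c-\sigma_kA^Tu)+\frac{1}{2\sigma_k}\|x^k\|^2 .$$ Starting from $x^0\in\mathbb{R}^n$, let the sequence $\{(x^k,u^k)\}$ be generated as follows: at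 iteration $k$, a vector $u^{k+1}\in\mathbb{R}^m$ is chosen and one sets $x^{k+1}=\mathrm{Prox}_{\sigma_k\lambda p}(x^k+\sigma_k c-\sigma_kA^Tu^{k+1})$, where $u^{k+1}$ is required to satisfy the criteria specified below; consider the criteria (A) $f_k(x^{k+1})-\psi_k(u^{k+1})\le \frac{\epsilon_k^2}{2\sigma_k}$; (B) $f_k(x^{k+1})-\psi_k(u^{k+1})\le \frac{\delta_k^2}{2\sigma_k}\|x^{k+1}-x^k\|^2+\frac{\tau\delta_k^2}{2\sigma_k}\|Ax^{k+1}-Ax^k\|^2$. Then: 1. If (A) is satisfied at every iteration, then $\{x^k\}$ is bounded and converges to some $x^*\in\Omega$. 2. Let $\mathcal{M}:=I_n+\tau A^TA$ and $\mathcal{T}_f:=\partial f$. Assume there exists $\kappa>0$ such that $$\mathrm{dist}(x,\Omega)\le\kappa\,\mathrm{dist}(0,\mathcal{T}_f(x))\quad\text{for all }x\in\mathbb{R}^n\text{ with }\mathrm{dist}(x,\Omega)\le\sum_{k=0}^\infty\epsilon_k+\mathrm{dist}_{\mathcal{M}}(x^0,\Omega).$$ If (A) and (B) are both satisfied at every iteration, then for all $k\ge0$, $$\mathrm{dist}_{\mathcal{M}}(x^{k+1},\Omega)\le\mu_k\,\mathrm{dist}_{\mathcal{M}}(x^k,\Omega),$$ where $\mu_k=(1-\delta_k)^{-1}\big[\delta_k+(1+\delta_k)\kappa\zeta(\sigma_k^2+\kappa^2\zeta^2)^{-1/2}\big]\to\mu_\infty=\kappa\zeta(\sigma_\infty^2+\kappa^2\zeta^2)^{-1/2}<1$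 as $k\to\infty$, with $\zeta:=1+\tau\lambda_{\max}(A^TA)$.
   Context: For a closed proper convex $q$, the Moreau envelope is $\mathrm{E}_q(x):=\min_y\{q(y)+\frac12\|y-x\|^2\}$ and $\mathrm{Prox}_q(x)$ is its unique minimizer. For a self-adjoint positive semidefinite linear operator $\mathcal{M}$, $\|x\|_{\mathcal{M}}:=\sqrt{\langle x,\mathcal{M}x\rangle}$ and $\mathrm{dist}_{\mathcal{M}}(x,\mathcal{C}):=\inf_{x'\in\mathcal{C}}\|x-x'\|_{\mathcal{M}}$; $\mathrm{dist}$ is the Euclidean distance; $\lambda_{\max}$ is the largest eigenvalue. When $\sigma_\infty=\infty$, $\mu_\infty=0$. *)

theory Defs
  imports "HOL-Analysis.Analysis" "HOL-Library.Extended_Real"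
begin

definition epigraph :: "('a \<Rightarrow> ereal) \<Rightarrow> ('a \<times> real) set" where
  "epigraph q = {(x, t). q x \<le> ereal t}"

definition ext_convex :: "('a::real_vector \<Rightarrow> ereal) \<Rightarrow> bool" where
  "ext_convex q \<longleftrightarrow> convex (epigraph q)"

definition ext_closed :: "('a::real_normed_vector \<Rightarrow> ereal) \<Rightarrow> bool" where
  "ext_closed q \<longleftrightarrow> closed (epigraph q)"

definition ext_proper :: "('a \<Rightarrow> ereal) \<Rightarrow> bool" where
  "ext_proper q \<longleftrightarrow> (\<forall>x. q x \<noteq> -\<infinity>) \<and> (\<exists>x. q x \<noteq> \<infinity>)"

definition C2_fun :: "(real^'m \<Rightarrow> real) \<Rightarrow> bool" where
  "C2_fun h \<longleftrightarrow> (\<exists>(g :: real^'m \<Rightarrow> real^'m) (H :: real^'m \<Rightarrow> real^'m^'m).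
      (\<forall>x. (h has_derivative (\<lambda>v. g x \<bullet> v)) (at x)) \<and>
      (\<forall>x. (g has_derivative (\<lambda>v. H x *v v)) (at x)) \<and>
      continuous_on UNIV H)"

definition moreau_env :: "('a::real_normed_vector \<Rightarrow> ereal) \<Rightarrow> 'a \<Rightarrow> real" where
  "moreau_env q x = real_of_ereal (INF y. q y + ereal (1/2 * (norm (y - x))\<^sup>2))"

definition prox :: "('a::real_normed_vector \<Rightarrow> ereal) \<Rightarrow> 'a \<Rightarrow> 'a" where
  "prox q x = (THE y. \<forall>z. q y + ereal (1/2 * (norm (y - x))\<^sup>2) \<le> q z + ereal (1/2 * (norm (z - x))\<^sup>2))"

definition subdiff :: "('a::real_inner \<Rightarrow> ereal) \<Rightarrow> 'a \<Rightarrow> 'a set" where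
  "subdiff q x = {v. q x < \<infinity> \<and> (\<forall>y. q x + ereal (v \<bullet> (y - x)) \<le> q y)}"

definition normM :: "real^'n^'n \<Rightarrow> real^'n \<Rightarrow> real" where
  "normM M v = sqrt (v \<bullet> (M *v v))"

definition distM :: "real^'n^'n \<Rightarrow> real^'n \<Rightarrow> (real^'n) set \<Rightarrow> real" where
  "distM M x C = (INF y\<in>C. normM M (x - y))"

definition lambda_max :: "real^'n^'n \<Rightarrow> real" where
  "lambda_max M = Max {\<mu>. \<exists>v. v \<noteq> 0 \<and> M *v v = \<mu> *\<^sub>R v}"

definition obj :: "real^'n^'m \<Rightarrow> real^'n \<Rightarrow> real \<Rightarrow> (real^'m \<Rightarrow> real) \<Rightarrow> (real^'n \<Rightarrow> ereal)
    \<Rightarrow> real^'n \<Rightarrow> ereal" where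
  "obj A c lam h p x = ereal (h (A *v x) - c \<bullet> x) + ereal lam * p x"

definition fk :: "real^'n^'m \<Rightarrow> real^'n \<Rightarrow> real \<Rightarrow> (real^'m \<Rightarrow> real) \<Rightarrow> (real^'n \<Rightarrow> ereal)
    \<Rightarrow> real \<Rightarrow> real \<Rightarrow> real^'n \<Rightarrow> real^'n \<Rightarrow> ereal" where
  "fk A c lam h p tau sig xk x = obj A c lam h p x +
     ereal (1 / (2 * sig) * (norm (x - xk))\<^sup>2 + tau / (2 * sig) * (norm (A *v x - A *v xk))\<^sup>2)"

definition psik :: "real^'n^'m \<Rightarrow> real^'n \<Rightarrow> real \<Rightarrow> (real^'m \<Rightarrow> real) \<Rightarrow> (real^'n \<Rightarrow> ereal)
    \<Rightarrow> real \<Rightarrow> real \<Rightarrow> real^'n \<Rightarrow> real^'m \<Rightarrow> real" where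
  "psik A c lam h p tau sig xk u =
     (let w = A *v xk + (sig / tau) *\<^sub>R u;
          z = xk + sig *\<^sub>R c - sig *\<^sub>R (transpose A *v u)
      in - tau / (2 * sig) * (norm w)\<^sup>2
         + tau / sig * moreau_env (\<lambda>y. ereal (sig / tau * h y)) w
         + tau / (2 * sig) * (norm (A *v xk))\<^sup>2
         - 1 / (2 * sig) * (norm z)\<^sup>2
         + 1 / sig * moreau_env (\<lambda>y. ereal (sig * lam) * p y) z
         + 1 / (2 * sig) * (norm xk)\<^sup>2)"

end

theory Submission
  imports Defs
begin

text \<open>
  With \<open>emb v = (v, sqrt tau A v)\<close> one has \<open>normM M v = norm (emb v)\<close> and
  \<open>f_k x = f x + norm (emb (x - x^k))^2 / (2 sigma_k)\<close>.  The exact minimiser \<open>xb^k\<close> of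
  \<open>f_k\<close> satisfies the three-point inequality, so it is Fejer monotone with respect to \<open>Omega\<close>
  in the \<open>M\<close>-norm and \<open>M (x^k - xb^k) / sigma_k\<close> is a subgradient of \<open>f\<close> at \<open>xb^k\<close>.
  Weak duality \<open>psi_k \<le> f_k\<close> turns criterion (A) into \<open>norm_M (x^(k+1) - xb^k) \<le> eps_k\<close>
  and (B) into \<open>norm_M (x^(k+1) - xb^k) \<le> delta_k norm_M (x^(k+1) - x^k)\<close>.

  Part 1 is then a quasi-Fejer argument: the \<open>M\<close>-distances of the iterates to each solution
  converge, the exact steps \<open>x^k - xb^k\<close> vanish, and by lower semicontinuity every cluster
  point minimises \<open>f\<close>.  For part 2, the error bound applied to that subgradient gives
  \<open>dist_M (xb^k, Omega) \<le> kappa zeta norm_M (x^k - xb^k) / sigma_k\<close>, and Fejer monotonicity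
  gives \<open>dist_M (xb^k, Omega)^2 + norm_M (x^k - xb^k)^2 \<le> dist_M (x^k, Omega)^2\<close>; together
  they bound \<open>dist_M (xb^k, Omega)\<close> by \<open>kappa zeta / sqrt (sigma_k^2 + kappa^2 zeta^2)\<close>
  times \<open>dist_M (x^k, Omega)\<close>, and the inexactness adds the \<open>delta_k\<close> terms.
\<close>

section \<open>Inner products and the largest eigenvalue of a symmetric matrix\<close>

lemma power2_norm_add:
  fixes a b :: "'a::real_inner"
  shows "(norm (a + b))\<^sup>2 = (norm a)\<^sup>2 + 2 * (a \<bullet> b) + (norm b)\<^sup>2"
  by (simp add: power2_norm_eq_inner inner_simps inner_commute)

lemma power2_norm_diff:
  fixes a b :: "'a::real_inner"
  shows "(norm (a - b))\<^sup>2 = (norm a)\<^sup>2 - 2 * (a \<bullet> b) + (norm b)\<^sup>2"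
  by (simp add: power2_norm_eq_inner inner_simps inner_commute)

lemma power2_norm_diff_shift:
  fixes y w a :: "'a::real_inner"
  shows "(norm (y - w))\<^sup>2 - (norm w)\<^sup>2 + (norm a)\<^sup>2 = (norm (y - a))\<^sup>2 - 2 * (y \<bullet> (w - a))"
  by (simp add: power2_norm_diff inner_diff_right)

lemma inner_transpose:
  fixes A :: "real^'n^'m"
  shows "x \<bullet> (transpose A *v u) = (A *v x) \<bullet> u"
  by (metis dot_lmul_matrix inner_commute transpose_matrix_vector)

lemma symmetric_matrix_inner:
  fixes B :: "real^'n^'n"
  assumes "transpose B = B"
  shows "(B *v x) \<bullet> y = x \<bullet> (B *v y)"
  by (metis assms dot_lmul_matrix transpose_matrix_vector)

lemma transpose_mult_self_inner:
  fixes A :: "real^'n^'m"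
  shows "((transpose A ** A) *v v) \<bullet> w = (A *v v) \<bullet> (A *v w)"
  by (metis dot_lmul_matrix matrix_vector_mul_assoc transpose_matrix_vector)

lemma symmetric_matrix_eigenvalues_finite:
  fixes B :: "real^'n^'n"
  assumes sym: "transpose B = B"
  shows "finite {\<mu>. \<exists>v. v \<noteq> 0 \<and> B *v v = \<mu> *\<^sub>R v}"
proof -
  let ?E = "{\<mu>. \<exists>v. v \<noteq> 0 \<and> B *v v = \<mu> *\<^sub>R v}"
  define ev where "ev \<mu> = (SOME v. v \<noteq> 0 \<and> B *v v = \<mu> *\<^sub>R v)" for \<mu>
  have ev: "ev \<mu> \<noteq> 0 \<and> B *v ev \<mu> = \<mu> *\<^sub>R ev \<mu>" if "\<mu> \<in> ?E" for \<mu>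
    using that unfolding ev_def by (rule CollectE) (rule someI_ex)
  have "inj_on ev ?E"
  proof (rule inj_onI)
    fix \<mu>1 \<mu>2 assume \<mu>: "\<mu>1 \<in> ?E" "\<mu>2 \<in> ?E" "ev \<mu>1 = ev \<mu>2"
    then have "\<mu>1 *\<^sub>R ev \<mu>1 = \<mu>2 *\<^sub>R ev \<mu>1" using ev[OF \<mu>(1)] ev[OF \<mu>(2)] by metis
    then show "\<mu>1 = \<mu>2" using ev[OF \<mu>(1)] by (simp add: scaleR_cancel_right)
  qed
  moreover have "pairwise orthogonal (ev ` ?E)"
  proof (rule pairwiseI)
    fix v w assume "v \<in> ev ` ?E" "w \<in> ev ` ?E" "v \<noteq> w"
    then obtain \<mu>1 \<mu>2 where \<mu>: "\<mu>1 \<in> ?E" "\<mu>2 \<in> ?E" "v = ev \<mu>1" "w = ev \<mu>2" "\<mu>1 \<noteq> \<mu>2"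
      by blast
    have "\<mu>1 * (v \<bullet> w) = (B *v v) \<bullet> w" using ev[OF \<mu>(1)] \<mu>(3) by simp
    also have "\<dots> = v \<bullet> (B *v w)" by (rule symmetric_matrix_inner[OF sym])
    also have "\<dots> = \<mu>2 * (v \<bullet> w)" using ev[OF \<mu>(2)] \<mu>(4) by simp
    finally show "orthogonal v w" using \<mu>(5) by (simp add: orthogonal_def)
  qed
  moreover have "0 \<notin> ev ` ?E"
  proof
    assume "0 \<in> ev ` ?E"
    then obtain \<mu> where "\<mu> \<in> ?E" "0 = ev \<mu>" by blast
    then show False using ev[of \<mu>] by simp
  qed
  ultimately have "finite (ev ` ?E)"
    using pairwise_orthogonal_independent independent_bound by blast
  with \<open>inj_on ev ?E\<close> show ?thesis using finite_imageD by blast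
qed

text \<open>Moving \<open>v\<close> along the residual \<open>r = \<mu> v - B v\<close> would decrease the nonnegative form
  \<open>\<mu> |w|\<^sup>2 - w \<bullet> B w\<close>, which vanishes at \<open>v\<close>, to first order unless \<open>r = 0\<close>.\<close>

lemma symmetric_matrix_rayleigh_eq_imp_eigenvector:
  fixes B :: "real^'n^'n"
  assumes sym: "transpose B = B" and bound: "\<And>w. w \<bullet> (B *v w) \<le> \<mu> * (norm w)\<^sup>2"
    and eq: "v \<bullet> (B *v v) = \<mu> * (norm v)\<^sup>2"
  shows "B *v v = \<mu> *\<^sub>R v"
proof -
  let ?g = "\<lambda>v::real^'n. v \<bullet> (B *v v)"
  define Q where "Q w = \<mu> * (norm w)\<^sup>2 - ?g w" for w
  have Q_nonneg: "Q w \<ge> 0" for w using bound[of w] by (simp add: Q_def)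
  define r where "r = \<mu> *\<^sub>R v - B *v v"
  have Q_along_r: "Q (v - t *\<^sub>R r) = - 2 * t * (r \<bullet> r) + t\<^sup>2 * Q r" for t
  proof -
    have sq: "(norm (v - t *\<^sub>R r))\<^sup>2 = (norm v)\<^sup>2 - 2 * t * (v \<bullet> r) + t\<^sup>2 * (norm r)\<^sup>2"
      by (simp add: power2_norm_diff power_mult_distrib)
    have "v \<bullet> (B *v r) = (B *v v) \<bullet> r" by (rule symmetric_matrix_inner[OF sym, symmetric])
    then have g: "?g (v - t *\<^sub>R r) = ?g v - 2 * t * ((B *v v) \<bullet> r) + t\<^sup>2 * ?g r"
      by (simp add: matrix_vector_mult_diff_distrib matrix_vector_mult_scaleR inner_diff_left
          inner_diff_right inner_commute power2_eq_square algebra_simps)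
    have "Q (v - t *\<^sub>R r) = Q v - 2 * t * (\<mu> * (v \<bullet> r) - (B *v v) \<bullet> r) + t\<^sup>2 * Q r"
      unfolding Q_def sq g by (simp add: algebra_simps)
    moreover have "\<mu> * (v \<bullet> r) - (B *v v) \<bullet> r = r \<bullet> r" by (simp add: r_def inner_diff_left)
    moreover have "Q v = 0" using eq by (simp add: Q_def)
    ultimately show ?thesis by simp
  qed
  have "r \<bullet> r \<le> 0"
  proof (rule ccontr)
    assume "\<not> r \<bullet> r \<le> 0"
    then have pos: "r \<bullet> r > 0" by linarith
    define t where "t = (r \<bullet> r) / (Q r + 1)"
    have t_pos: "t > 0" using pos Q_nonneg[of r] by (simp add: t_def)
    have "t * Q r = (r \<bullet> r) * (Q r / (Q r + 1))" by (simp add: t_def)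
    also have "\<dots> \<le> (r \<bullet> r) * 1" using pos Q_nonneg[of r] by (intro mult_left_mono) auto
    finally have "t * Q r < 2 * (r \<bullet> r)" using pos by linarith
    then have "t * (t * Q r - 2 * (r \<bullet> r)) < 0" using t_pos by (intro mult_pos_neg) auto
    then have "- 2 * t * (r \<bullet> r) + t\<^sup>2 * Q r < 0" by (simp add: power2_eq_square algebra_simps)
    then show False using Q_nonneg[of "v - t *\<^sub>R r"] Q_along_r[of t] by simp
  qed
  then have "r = 0" by (metis inner_eq_zero_iff inner_ge_zero order_antisym)
  then show ?thesis by (simp add: r_def)
qed

lemma symmetric_matrix_rayleigh_eigenvalue:
  fixes B :: "real^'n^'n"
  assumes sym: "transpose B = B"
  obtains \<mu> v where "v \<noteq> 0" "B *v v = \<mu> *\<^sub>R v" "\<And>w. w \<bullet> (B *v w) \<le> \<mu> * (norm w)\<^sup>2"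
proof -
  let ?g = "\<lambda>v::real^'n. v \<bullet> (B *v v)"
  obtain b :: "real^'n" where "b \<in> Basis" using nonempty_Basis by blast
  then have "b \<in> sphere 0 1" by simp
  then have "sphere (0::real^'n) 1 \<noteq> {}" by blast
  moreover have "compact (sphere (0::real^'n) 1)" by simp
  moreover have "continuous_on (sphere 0 1) ?g"
    by (intro continuous_on_inner continuous_on_id linear_continuous_on matrix_vector_mul_bounded_linear)
  ultimately obtain v where v: "v \<in> sphere 0 1" "\<forall>y\<in>sphere 0 1. ?g y \<le> ?g v"
    using continuous_attains_sup by blast
  define \<mu> where "\<mu> = ?g v"
  have bound: "?g w \<le> \<mu> * (norm w)\<^sup>2" for w
  proof (cases "w = 0")
    case False
    have "(1 / norm w) *\<^sub>R w \<in> sphere 0 1" using False by simp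
    then have "?g ((1 / norm w) *\<^sub>R w) \<le> \<mu>" using v unfolding \<mu>_def by blast
    moreover have "?g ((1 / norm w) *\<^sub>R w) = ?g w / (norm w)\<^sup>2"
      by (simp only: matrix_vector_mult_scaleR inner_scaleR_left inner_scaleR_right)
        (simp add: power2_eq_square)
    ultimately have "?g w / (norm w)\<^sup>2 \<le> \<mu>" by linarith
    then show ?thesis using False by (simp add: divide_le_eq)
  qed simp
  moreover have "?g v = \<mu> * (norm v)\<^sup>2" using v by (simp add: \<mu>_def)
  ultimately have "B *v v = \<mu> *\<^sub>R v" by (rule symmetric_matrix_rayleigh_eq_imp_eigenvector[OF sym])
  moreover have "v \<noteq> 0" using v by auto
  ultimately show ?thesis using that bound by blast
qed

lemma lambda_max_rayleigh:
  fixes B :: "real^'n^'n"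
  assumes sym: "transpose B = B"
  shows "w \<bullet> (B *v w) \<le> lambda_max B * (norm w)\<^sup>2"
proof -
  obtain \<mu> v where "v \<noteq> 0" "B *v v = \<mu> *\<^sub>R v" and bound: "\<And>w. w \<bullet> (B *v w) \<le> \<mu> * (norm w)\<^sup>2"
    using symmetric_matrix_rayleigh_eigenvalue[OF sym] by blast
  then have "\<mu> \<le> lambda_max B"
    unfolding lambda_max_def using symmetric_matrix_eigenvalues_finite[OF sym] by (intro Max_ge) auto
  then show ?thesis using bound[of w] by (meson mult_right_mono order_trans zero_le_power2)
qed

lemma lambda_max_transpose_mult_self:
  fixes A :: "real^'n^'m"
  shows "(norm (A *v v))\<^sup>2 \<le> lambda_max (transpose A ** A) * (norm v)\<^sup>2"
    and "lambda_max (transpose A ** A) \<ge> 0"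
proof -
  have sym: "transpose (transpose A ** A) = transpose A ** A" by (simp add: matrix_transpose_mul)
  show bound: "(norm (A *v v))\<^sup>2 \<le> lambda_max (transpose A ** A) * (norm v)\<^sup>2" for v
    using lambda_max_rayleigh[OF sym, of v] transpose_mult_self_inner[of A v v]
    by (simp add: power2_norm_eq_inner inner_commute)
  obtain b :: "real^'n" where "b \<in> Basis" using nonempty_Basis by blast
  then show "lambda_max (transpose A ** A) \<ge> 0"
    using bound[of b] by (simp add: norm_Basis) (meson order_trans zero_le_power2)
qed

lemma norm_transpose_le:
  fixes A :: "real^'n^'m"
  assumes bound: "\<And>v. (norm (A *v v))\<^sup>2 \<le> L * (norm v)\<^sup>2"
  shows "(norm (transpose A *v y))\<^sup>2 \<le> L * (norm y)\<^sup>2"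
proof -
  obtain b :: "real^'n" where "b \<in> Basis" using nonempty_Basis by blast
  then have L: "L \<ge> 0" using bound[of b] by (simp add: norm_Basis) (meson order_trans zero_le_power2)
  let ?v = "transpose A *v y"
  have "(norm ?v)\<^sup>2 = (A *v ?v) \<bullet> y"
    by (metis dot_lmul_matrix inner_commute power2_norm_eq_inner transpose_matrix_vector)
  also have "\<dots> \<le> norm (A *v ?v) * norm y" by (rule norm_cauchy_schwarz)
  also have "\<dots> \<le> sqrt L * norm ?v * norm y"
  proof (rule mult_right_mono)
    have "norm (A *v ?v) \<le> sqrt (L * (norm ?v)\<^sup>2)" using bound[of ?v] by (rule real_le_rsqrt)
    then show "norm (A *v ?v) \<le> sqrt L * norm ?v" by (simp add: real_sqrt_mult)
  qed simp
  finally have "norm ?v \<le> sqrt L * norm y"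
    by (cases "norm ?v = 0") (use L in \<open>auto simp: power2_eq_square mult.assoc mult.left_commute\<close>)
  then have "(norm ?v)\<^sup>2 \<le> (sqrt L * norm y)\<^sup>2" by (intro power_mono) auto
  then show ?thesis using L by (simp add: power_mult_distrib)
qed

section \<open>Convex-analytic preliminaries\<close>

lemma ext_proper_affine_minorant:
  fixes q :: "'a::euclidean_space \<Rightarrow> ereal"
  assumes "ext_closed q" "ext_convex q" "ext_proper q"
  obtains a b where "\<And>x. ereal (a \<bullet> x + b) \<le> q x"
proof -
  obtain x0 r where r: "q x0 = ereal r"
    using assms(3) unfolding ext_proper_def by (metis ereal_cases)
  have "(x0, r - 1) \<notin> epigraph q" using r by (simp add: epigraph_def)
  then obtain a b where ab: "a \<bullet> (x0, r - 1) < b" "\<forall>z\<in>epigraph q. b < a \<bullet> z"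
    using separating_hyperplane_closed_point assms(1,2)
    unfolding ext_closed_def ext_convex_def by blast
  obtain a1 a2 where a: "a = (a1, a2)" by (cases a)
  have "(x0, r) \<in> epigraph q" using r by (simp add: epigraph_def)
  with ab have "a1 \<bullet> x0 + a2 * (r - 1) < b" "b < a1 \<bullet> x0 + a2 * r" by (auto simp: a)
  then have a2: "a2 > 0" by (simp add: algebra_simps)
  have "ereal ((- (1 / a2) *\<^sub>R a1) \<bullet> x + b / a2) \<le> q x" for x
  proof (cases "q x")
    case (real s)
    then have "(x, s) \<in> epigraph q" by (simp add: epigraph_def)
    with ab have "b < a1 \<bullet> x + a2 * s" by (auto simp: a)
    then have "(- (1 / a2) *\<^sub>R a1) \<bullet> x + b / a2 \<le> s" using a2 by (simp add: field_simps)
    then show ?thesis using real by simp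
  next
    case MInf
    then show ?thesis using assms(3) by (simp add: ext_proper_def)
  qed simp
  then show ?thesis by (rule that)
qed

lemma convex_continuous_affine_minorant:
  fixes g :: "'a::euclidean_space \<Rightarrow> real"
  assumes "convex_on UNIV g" "continuous_on UNIV g"
  obtains a b where "\<And>x. a \<bullet> x + b \<le> g x"
proof -
  have epi: "epigraph (\<lambda>x. ereal (g x)) = {z. g (fst z) \<le> snd z}"
    by (auto simp: epigraph_def)
  have "ext_closed (\<lambda>x. ereal (g x))"
    unfolding ext_closed_def epi
    by (intro closed_Collect_le continuous_on_compose2[OF assms(2)] continuous_intros) auto
  moreover have "ext_convex (\<lambda>x. ereal (g x))"
    unfolding ext_convex_def epi
  proof (rule convexI)
    fix z w :: "'a \<times> real" and u v :: real
    assume zw: "z \<in> {z. g (fst z) \<le> snd z}" "w \<in> {z. g (fst z) \<le> snd z}"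
      and uv: "0 \<le> u" "0 \<le> v" "u + v = 1"
    have "g (u *\<^sub>R fst z + v *\<^sub>R fst w) \<le> u * g (fst z) + v * g (fst w)"
      using assms(1) uv by (simp add: convex_on_def)
    also have "\<dots> \<le> u * snd z + v * snd w"
      using zw uv by (intro add_mono mult_left_mono) auto
    finally show "u *\<^sub>R z + v *\<^sub>R w \<in> {z. g (fst z) \<le> snd z}" by simp
  qed
  moreover have "ext_proper (\<lambda>x. ereal (g x))" by (simp add: ext_proper_def)
  ultimately obtain a b where "\<And>x. ereal (a \<bullet> x + b) \<le> ereal (g x)"
    by (rule ext_proper_affine_minorant) blast
  then have "\<And>x. a \<bullet> x + b \<le> g x" by simp
  then show ?thesis by (rule that)
qed

lemma C2_fun_continuous: "C2_fun h \<Longrightarrow> continuous_on UNIV h"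
  unfolding C2_fun_def by (metis continuous_at_imp_continuous_on has_derivative_continuous)

lemma ext_closed_lsc:
  fixes q :: "'a::real_normed_vector \<Rightarrow> ereal"
  assumes "ext_closed q" "y \<longlonglongrightarrow> y0" "t \<longlonglongrightarrow> t0" "\<And>n. q (y n) \<le> ereal (t n)"
  shows "q y0 \<le> ereal t0"
proof -
  have "closed (epigraph q)" using assms(1) by (simp add: ext_closed_def)
  moreover have "\<And>n. (y n, t n) \<in> epigraph q" using assms(4) by (simp add: epigraph_def)
  moreover have "(\<lambda>n. (y n, t n)) \<longlonglongrightarrow> (y0, t0)" using assms(2,3) by (rule tendsto_Pair)
  ultimately have "(y0, t0) \<in> epigraph q" by (rule closed_sequentially)
  then show ?thesis by (simp add: epigraph_def)
qed

text \<open>The affine minorant keeps the infimum away from \<open>-\<infinity>\<close>, where \<open>real_of_ereal\<close>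
  would return the junk value \<open>0\<close>.\<close>

lemma moreau_env_le:
  fixes q :: "'a::real_inner \<Rightarrow> ereal"
  assumes minorant: "\<And>y. ereal (a \<bullet> y + b) \<le> q y" and x: "q x = ereal r"
  shows "moreau_env q w \<le> r + 1/2 * (norm (x - w))\<^sup>2"
proof -
  let ?I = "INF y. q y + ereal (1/2 * (norm (y - w))\<^sup>2)"
  have upper: "?I \<le> ereal (r + 1/2 * (norm (x - w))\<^sup>2)"
    by (rule INF_lower2[of x]) (auto simp: x)
  have "ereal (b + a \<bullet> w - 1/2 * (norm a)\<^sup>2) \<le> ?I"
  proof (rule INF_greatest)
    fix y
    have "(norm (y - w + a))\<^sup>2 = (norm (y - w))\<^sup>2 + 2 * (a \<bullet> y - a \<bullet> w) + (norm a)\<^sup>2"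
      by (simp add: power2_norm_add inner_diff_left inner_diff_right inner_commute)
    then have "0 \<le> (norm (y - w))\<^sup>2 + 2 * (a \<bullet> y - a \<bullet> w) + (norm a)\<^sup>2"
      using zero_le_power2[of "norm (y - w + a)"] by linarith
    then have "b + a \<bullet> w - 1/2 * (norm a)\<^sup>2 \<le> (a \<bullet> y + b) + 1/2 * (norm (y - w))\<^sup>2"
      by (simp add: field_simps)
    then have "ereal (b + a \<bullet> w - 1/2 * (norm a)\<^sup>2)
        \<le> ereal (a \<bullet> y + b) + ereal (1/2 * (norm (y - w))\<^sup>2)" by simp
    also have "\<dots> \<le> q y + ereal (1/2 * (norm (y - w))\<^sup>2)"
      using minorant by (rule add_right_mono)
    finally show "ereal (b + a \<bullet> w - 1/2 * (norm a)\<^sup>2) \<le> q y + ereal (1/2 * (norm (y - w))\<^sup>2)" .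
  qed
  with upper obtain v where "?I = ereal v" by (cases ?I) auto
  then show ?thesis using upper unfolding moreau_env_def by simp
qed

lemma nonneg_if_small_perturbations_nonneg:
  fixes a K :: real
  assumes "\<And>t. 0 < t \<Longrightarrow> t \<le> 1 \<Longrightarrow> 0 \<le> a + t * K"
  shows "0 \<le> a"
proof (rule tendsto_lowerbound)
  have "((\<lambda>t. a + t * K) \<longlongrightarrow> a + 0 * K) (at_right 0)" by (intro tendsto_intros)
  then show "((\<lambda>t. a + t * K) \<longlongrightarrow> a) (at_right 0)" by simp
  show "\<forall>\<^sub>F t in at_right 0. 0 \<le> a + t * K"
    using assms by (auto simp: eventually_at_right_field intro!: exI[of _ 1])
qed simp

text \<open>Optimality of \<open>xb\<close> for \<open>F x + |T (x - z)|\<^sup>2 / (2 s)\<close> on a convex set: comparing with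
  \<open>xb + t (y - xb)\<close> and letting \<open>t \<rightarrow> 0\<close> gives the subgradient inequality, and adding back the
  quadratic gives the three-point inequality.\<close>

lemma proximal_subgradient_ineq:
  fixes F :: "'a::real_vector \<Rightarrow> real" and T :: "'a \<Rightarrow> 'b::real_inner"
  assumes F: "convex_on D F" and T: "linear T" and s: "s > 0" and xb: "xb \<in> D"
    and min: "\<And>y. y \<in> D \<Longrightarrow>
      F xb + (norm (T (xb - z)))\<^sup>2 / (2 * s) \<le> F y + (norm (T (y - z)))\<^sup>2 / (2 * s)"
    and y: "y \<in> D"
  shows "F xb + (T z - T xb) \<bullet> (T y - T xb) / s \<le> F y"
proof -
  define a where "a = T (xb - z)"
  define d where "d = T (y - xb)"
  have "0 \<le> (F y - F xb + (a \<bullet> d) / s) + t * ((norm d)\<^sup>2 / (2 * s))" if t: "0 < t" "t \<le> 1" for t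
  proof -
    let ?yt = "(1 - t) *\<^sub>R xb + t *\<^sub>R y"
    have "convex D" using F by (simp add: convex_on_def)
    then have yt: "?yt \<in> D" using xb y t by (intro convexD_alt) auto
    have "T (?yt - z) = a + t *\<^sub>R d"
      unfolding a_def d_def using T by (simp add: linear_diff linear_add linear_scale algebra_simps)
    then have "F xb + (norm a)\<^sup>2 / (2 * s) \<le> F ?yt + (norm (a + t *\<^sub>R d))\<^sup>2 / (2 * s)"
      using min[OF yt] by (simp only: a_def)
    moreover have "F ?yt \<le> (1 - t) * F xb + t * F y" using convex_onD[OF F] t xb y by simp
    moreover have "(norm (a + t *\<^sub>R d))\<^sup>2 = (norm a)\<^sup>2 + 2 * t * (a \<bullet> d) + t\<^sup>2 * (norm d)\<^sup>2"
      by (simp add: power2_norm_add power_mult_distrib)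
    then have "(norm (a + t *\<^sub>R d))\<^sup>2 / (2 * s) - (norm a)\<^sup>2 / (2 * s)
        = t * ((a \<bullet> d) / s) + t * (t * ((norm d)\<^sup>2 / (2 * s)))"
      using s by (simp add: field_simps power2_eq_square)
    ultimately have "0 \<le> t * (F y - F xb) + t * ((a \<bullet> d) / s) + t * (t * ((norm d)\<^sup>2 / (2 * s)))"
      by (simp add: algebra_simps)
    then have "0 \<le> t * ((F y - F xb + (a \<bullet> d) / s) + t * ((norm d)\<^sup>2 / (2 * s)))"
      by (simp add: algebra_simps)
    then show ?thesis using t by (simp add: zero_le_mult_iff)
  qed
  then have "0 \<le> F y - F xb + (a \<bullet> d) / s" by (rule nonneg_if_small_perturbations_nonneg)
  moreover have "a \<bullet> d = - ((T z - T xb) \<bullet> (T y - T xb))"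
    unfolding a_def d_def using T by (simp add: linear_diff inner_diff_left algebra_simps)
  ultimately show ?thesis by simp
qed

lemma proximal_three_point_ineq:
  fixes F :: "'a::real_vector \<Rightarrow> real" and T :: "'a \<Rightarrow> 'b::real_inner"
  assumes F: "convex_on D F" and T: "linear T" and s: "s > 0" and xb: "xb \<in> D"
    and min: "\<And>y. y \<in> D \<Longrightarrow>
      F xb + (norm (T (xb - z)))\<^sup>2 / (2 * s) \<le> F y + (norm (T (y - z)))\<^sup>2 / (2 * s)"
    and y: "y \<in> D"
  shows "F xb + (norm (T (xb - z)))\<^sup>2 / (2 * s) + (norm (T y - T xb))\<^sup>2 / (2 * s)
    \<le> F y + (norm (T (y - z)))\<^sup>2 / (2 * s)"
proof -
  define G where "G = (T z - T xb) \<bullet> (T y - T xb)"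
  have "(norm (T (y - z)))\<^sup>2 = (norm ((T xb - T z) + (T y - T xb)))\<^sup>2"
    using T by (simp add: linear_diff)
  also have "\<dots> = (norm (T xb - T z))\<^sup>2 + 2 * ((T xb - T z) \<bullet> (T y - T xb)) + (norm (T y - T xb))\<^sup>2"
    by (rule power2_norm_add)
  also have "(T xb - T z) \<bullet> (T y - T xb) = - G" by (simp add: G_def inner_diff_left)
  also have "T xb - T z = T (xb - z)" using T by (simp add: linear_diff)
  finally have "(norm (T (y - z)))\<^sup>2 / (2 * s)
      = (norm (T (xb - z)))\<^sup>2 / (2 * s) - G / s + (norm (T y - T xb))\<^sup>2 / (2 * s)"
    using s by (simp add: field_simps)
  moreover have "F xb + G / s \<le> F y"
    unfolding G_def by (rule proximal_subgradient_ineq[OF assms])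
  ultimately show ?thesis by linarith
qed

section \<open>Sequences and rates\<close>

lemma quasi_fejer_bound:
  fixes a e :: "nat \<Rightarrow> real"
  assumes step: "\<And>k. a (Suc k) \<le> a k + e k" and e: "\<And>k. 0 \<le> e k" "summable e"
  shows "a k \<le> a 0 + suminf e"
proof -
  have "a k \<le> a 0 + (\<Sum>j<k. e j)"
  proof (induction k)
    case (Suc k)
    then show ?case using step[of k] by simp
  qed simp
  moreover have "(\<Sum>j<k. e j) \<le> suminf e" using e by (intro sum_le_suminf) auto
  ultimately show ?thesis by linarith
qed

text \<open>\<open>a k - \<Sum>j<k. e j\<close> is decreasing and bounded below.\<close>

lemma quasi_fejer_convergent:
  fixes a e :: "nat \<Rightarrow> real"
  assumes step: "\<And>k. a (Suc k) \<le> a k + e k" and a: "\<And>k. 0 \<le> a k"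
    and e: "\<And>k. 0 \<le> e k" "summable e"
  shows "convergent a"
proof -
  define b where "b k = a k - (\<Sum>j<k. e j)" for k
  have "decseq b" unfolding decseq_Suc_iff b_def using step by (simp add: algebra_simps)
  moreover have "\<forall>k. - suminf e \<le> b k"
  proof
    fix k
    have "(\<Sum>j<k. e j) \<le> suminf e" using e by (intro sum_le_suminf) auto
    then show "- suminf e \<le> b k" using a[of k] by (simp add: b_def)
  qed
  ultimately obtain L where "b \<longlonglongrightarrow> L" using decseq_convergent by blast
  then have "(\<lambda>k. b k + (\<Sum>j<k. e j)) \<longlonglongrightarrow> L + suminf e"
    using summable_LIMSEQ[OF e(2)] by (intro tendsto_add)
  then show ?thesis by (auto simp: b_def convergent_def)
qed

lemma LIMSEQ_if_convergent_dist_subseq: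
  fixes y :: "nat \<Rightarrow> 'a::metric_space"
  assumes "convergent (\<lambda>k. dist (y k) l)" "strict_mono r" "(y \<circ> r) \<longlonglongrightarrow> l"
  shows "y \<longlonglongrightarrow> l"
proof -
  obtain L where L: "(\<lambda>k. dist (y k) l) \<longlonglongrightarrow> L" using assms(1) by (auto simp: convergent_def)
  have "(\<lambda>n. dist (y (r n)) l) \<longlonglongrightarrow> L"
    using LIMSEQ_subseq_LIMSEQ[OF L assms(2)] by (simp add: comp_def)
  moreover have "(\<lambda>n. dist (y (r n)) l) \<longlonglongrightarrow> 0"
    using tendsto_dist_iff[THEN iffD1, OF assms(3)] by (simp add: comp_def)
  ultimately have "L = 0" by (rule LIMSEQ_unique)
  then have "(\<lambda>k. dist (y k) l) \<longlonglongrightarrow> 0" using L by simp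
  then show ?thesis by (rule tendsto_dist_iff[THEN iffD2])
qed

lemma le_mult_infdistI:
  assumes "S \<noteq> {}" "C \<ge> 0" "\<And>a. a \<in> S \<Longrightarrow> d \<le> C * dist x a"
  shows "d \<le> C * infdist x S"
proof (cases "C = 0")
  case True
  then show ?thesis using assms(1,3) by auto
next
  case False
  then have C: "C > 0" using assms(2) by simp
  then have "d / C \<le> dist x a" if "a \<in> S" for a
    using assms(3)[OF that] by (simp add: pos_divide_le_eq mult.commute)
  then have "d / C \<le> infdist x S"
    unfolding infdist_notempty[OF assms(1)] using assms(1) by (intro cINF_greatest)
  then show ?thesis using C by (simp add: pos_divide_le_eq mult.commute)
qed

text \<open>The one-step estimate behind the linear rate: \<open>d\<close>, \<open>d'\<close> are the distances of the
  old and new iterate to the solution set, \<open>Db\<close> that of the exact proximal point, \<open>sg\<close> the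
  length of the exact step and \<open>e\<close> the inexactness.  The Fejer inequality bounds \<open>Db\<close> by
  \<open>sqrt (d\<^sup>2 - sg\<^sup>2)\<close> and the error bound by \<open>K sg / s\<close>; their minimum over \<open>sg\<close> is
  \<open>K d / sqrt (s\<^sup>2 + K\<^sup>2)\<close>.\<close>

lemma contraction_factor_bound:
  fixes dl K s Db sg e d d' :: real
  assumes dl: "0 \<le> dl" "dl < 1" and K: "K > 0" and s: "s > 0"
    and nonneg: "0 \<le> Db" "0 \<le> sg" "0 \<le> d"
    and fejer: "Db\<^sup>2 \<le> d\<^sup>2 - sg\<^sup>2" and error_bound: "Db \<le> K * sg / s"
    and inexact: "e \<le> dl * (e + sg)" and triangle: "d' \<le> Db + e"
  shows "d' \<le> 1 / (1 - dl) * (dl + (1 + dl) * K / sqrt (s\<^sup>2 + K\<^sup>2)) * d"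
proof -
  define R where "R = sqrt (s\<^sup>2 + K\<^sup>2)"
  have R: "R > 0" "R\<^sup>2 = s\<^sup>2 + K\<^sup>2" unfolding R_def using s by (simp_all add: add_pos_nonneg)
  have "sg\<^sup>2 \<le> d\<^sup>2" using fejer zero_le_power2[of Db] by linarith
  then have sg_d: "sg \<le> d" using nonneg by (simp add: power2_le_iff_abs_le)
  have "(Db * s)\<^sup>2 \<le> (K * sg)\<^sup>2"
    using error_bound nonneg s by (intro power_mono) (simp_all add: pos_le_divide_eq)
  also have "\<dots> = K\<^sup>2 * sg\<^sup>2" by (simp add: power_mult_distrib)
  also have "\<dots> \<le> K\<^sup>2 * (d\<^sup>2 - Db\<^sup>2)" using fejer by (intro mult_left_mono) auto
  finally have "(Db * R)\<^sup>2 \<le> (K * d)\<^sup>2" using R by (simp add: power_mult_distrib algebra_simps)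
  then have "Db * R \<le> K * d" using K nonneg by (simp add: power2_le_iff_abs_le)
  then have Db: "Db \<le> K / R * d" using R by (simp add: field_simps)
  have "e * (1 - dl) \<le> dl * d"
    using inexact mult_left_mono[OF sg_d dl(1)] by (simp add: algebra_simps)
  then have e: "e \<le> dl * d / (1 - dl)" using dl by (simp add: field_simps)
  have "K / R * d \<le> (1 + dl) * (K / R * d) / (1 - dl)"
    using dl K R nonneg by (simp add: field_simps mult_right_mono)
  with triangle Db e have "d' \<le> ((1 + dl) * (K / R * d) + dl * d) / (1 - dl)"
    by (simp add: add_divide_distrib)
  also have "\<dots> = 1 / (1 - dl) * (dl + (1 + dl) * K / R) * d"
    using dl(2) R(1) by (simp add: field_simps)
  finally show ?thesis unfolding R_def .
qed

lemma K_div_sqrt_limit: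
  fixes \<sigma> :: "nat \<Rightarrow> real" and K :: real
  assumes \<sigma>: "\<And>k. \<sigma> k > 0" "mono \<sigma>" and K: "K > 0"
  defines "\<theta> \<equiv> if (SUP k. ereal (\<sigma> k)) = \<infinity> then 0
    else K / sqrt ((real_of_ereal (SUP k. ereal (\<sigma> k)))\<^sup>2 + K\<^sup>2)"
  shows "(\<lambda>k. K / sqrt ((\<sigma> k)\<^sup>2 + K\<^sup>2)) \<longlonglongrightarrow> \<theta> \<and> \<theta> < 1"
proof -
  define \<sigma>_lim where "\<sigma>_lim = (SUP k. ereal (\<sigma> k))"
  have lim: "(\<lambda>k. ereal (\<sigma> k)) \<longlonglongrightarrow> \<sigma>_lim"
    unfolding \<sigma>_lim_def using \<sigma>(2) by (intro LIMSEQ_SUP) (simp add: incseq_def mono_def)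
  have "ereal (\<sigma> 0) \<le> \<sigma>_lim" unfolding \<sigma>_lim_def by (rule SUP_upper) simp
  show ?thesis
  proof (cases "\<sigma>_lim = \<infinity>")
    case True
    then have "filterlim \<sigma> at_top sequentially"
      using lim by (simp add: tendsto_PInfty_eq_at_top)
    moreover have "\<sigma> k \<le> sqrt ((\<sigma> k)\<^sup>2 + K\<^sup>2)" for k
    proof -
      have "\<sigma> k = sqrt ((\<sigma> k)\<^sup>2)" using \<sigma>(1)[of k] by simp
      also have "\<dots> \<le> sqrt ((\<sigma> k)\<^sup>2 + K\<^sup>2)" by simp
      finally show ?thesis .
    qed
    then have "\<forall>\<^sub>F k in sequentially. \<sigma> k \<le> sqrt ((\<sigma> k)\<^sup>2 + K\<^sup>2)" by simp
    ultimately have "filterlim (\<lambda>k. sqrt ((\<sigma> k)\<^sup>2 + K\<^sup>2)) at_top sequentially"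
      by (rule filterlim_at_top_mono)
    then have "filterlim (\<lambda>k. sqrt ((\<sigma> k)\<^sup>2 + K\<^sup>2)) at_infinity sequentially"
      by (rule filterlim_at_top_imp_at_infinity)
    then have "(\<lambda>k. K / sqrt ((\<sigma> k)\<^sup>2 + K\<^sup>2)) \<longlonglongrightarrow> 0"
      by (rule tendsto_divide_0[OF tendsto_const])
    then show ?thesis using True by (simp add: \<theta>_def \<sigma>_lim_def)
  next
    case False
    with \<open>ereal (\<sigma> 0) \<le> \<sigma>_lim\<close> obtain s where s: "\<sigma>_lim = ereal s" by (cases \<sigma>_lim) auto
    then have "s > 0" using \<open>ereal (\<sigma> 0) \<le> \<sigma>_lim\<close> \<sigma>(1)[of 0] by simp
    have "\<sigma> \<longlonglongrightarrow> s" using lim s by simp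
    then have "(\<lambda>k. K / sqrt ((\<sigma> k)\<^sup>2 + K\<^sup>2)) \<longlonglongrightarrow> K / sqrt (s\<^sup>2 + K\<^sup>2)"
      using K by (intro tendsto_intros) (auto simp: add_nonneg_pos)
    moreover have "K < sqrt (s\<^sup>2 + K\<^sup>2)"
      using real_sqrt_less_mono[of "K\<^sup>2" "s\<^sup>2 + K\<^sup>2"] K \<open>s > 0\<close> by simp
    then have "K / sqrt (s\<^sup>2 + K\<^sup>2) < 1" using K by (subst divide_less_eq_1_pos) (auto simp: add_nonneg_pos)
    ultimately show ?thesis using s by (simp add: \<theta>_def \<sigma>_lim_def)
  qed
qed

lemma rate_factor_limit:
  fixes \<sigma> \<delta> :: "nat \<Rightarrow> real" and K :: real
  assumes \<sigma>: "\<And>k. \<sigma> k > 0" "mono \<sigma>" and \<delta>: "\<delta> \<longlonglongrightarrow> 0" and K: "K > 0"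
  defines "\<theta> \<equiv> if (SUP k. ereal (\<sigma> k)) = \<infinity> then 0
    else K / sqrt ((real_of_ereal (SUP k. ereal (\<sigma> k)))\<^sup>2 + K\<^sup>2)"
  shows "(\<lambda>k. 1 / (1 - \<delta> k) * (\<delta> k + (1 + \<delta> k) * K / sqrt ((\<sigma> k)\<^sup>2 + K\<^sup>2))) \<longlonglongrightarrow> \<theta>"
    and "\<theta> < 1"
proof -
  have \<theta>: "(\<lambda>k. K / sqrt ((\<sigma> k)\<^sup>2 + K\<^sup>2)) \<longlonglongrightarrow> \<theta>" "\<theta> < 1"
    using K_div_sqrt_limit[OF \<sigma> K] unfolding \<theta>_def by auto
  then have "(\<lambda>k. 1 / (1 - \<delta> k) * (\<delta> k + (1 + \<delta> k) * (K / sqrt ((\<sigma> k)\<^sup>2 + K\<^sup>2))))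
      \<longlonglongrightarrow> 1 / (1 - 0) * (0 + (1 + 0) * \<theta>)"
    by (intro tendsto_intros \<delta>) auto
  then show "(\<lambda>k. 1 / (1 - \<delta> k) * (\<delta> k + (1 + \<delta> k) * K / sqrt ((\<sigma> k)\<^sup>2 + K\<^sup>2))) \<longlonglongrightarrow> \<theta>"
    by simp
  show "\<theta> < 1" by (rule \<theta>(2))
qed

section \<open>The composite problem and its proximal subproblems\<close>

locale composite_problem =
  fixes A :: "real^'n^'m" and c :: "real^'n" and lam tau :: real
    and h :: "real^'m \<Rightarrow> real" and p :: "real^'n \<Rightarrow> ereal"
  assumes lam_pos: "lam > 0" and tau_pos: "tau > 0"
    and h_convex: "convex_on UNIV h" and h_cont: "continuous_on UNIV h"
    and p_closed: "ext_closed p" and p_proper: "ext_proper p" and p_convex: "ext_convex p"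
    and solvable: "\<exists>z. \<forall>y. obj A c lam h p z \<le> obj A c lam h p y"
begin

definition "Sol = {z. \<forall>y. obj A c lam h p z \<le> obj A c lam h p y}"

definition "dom_p = {x. p x \<noteq> \<infinity>}"

definition "p_real x = real_of_ereal (p x)"

definition "F x = h (A *v x) - c \<bullet> x + lam * p_real x"

definition "M = mat 1 + tau *\<^sub>R (transpose A ** A)"

definition "zeta = 1 + tau * lambda_max (transpose A ** A)"

text \<open>\<open>emb\<close> is an isometry from \<open>(real^'n, normM M)\<close> into a Euclidean space.\<close>

definition "emb v = (v, sqrt tau *\<^sub>R (A *v v))"

definition "prox_obj s xk x = F x + (norm (emb (x - xk)))\<^sup>2 / (2 * s)"

definition "prox_point s xk = (SOME xb. xb \<in> dom_p \<and> (\<forall>y\<in>dom_p. prox_obj s xk xb \<le> prox_obj s xk y))"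

definition "dual_gap s xk x u = fk A c lam h p tau s xk x - ereal (psik A c lam h p tau s xk u)"

lemma p_finite: "x \<in> dom_p \<Longrightarrow> p x = ereal (p_real x)"
  using p_proper unfolding dom_p_def p_real_def ext_proper_def by (cases "p x") auto

lemma p_infinite: "x \<notin> dom_p \<Longrightarrow> p x = \<infinity>"
  unfolding dom_p_def by simp

lemma obj_finite: "x \<in> dom_p \<Longrightarrow> obj A c lam h p x = ereal (F x)"
  by (simp add: obj_def F_def p_finite)

lemma obj_infinite: "x \<notin> dom_p \<Longrightarrow> obj A c lam h p x = \<infinity>"
  using lam_pos by (simp add: obj_def p_infinite)

lemma dom_p_nonempty: "dom_p \<noteq> {}"
  using p_proper unfolding ext_proper_def dom_p_def by auto

lemma Sol_nonempty: "Sol \<noteq> {}"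
  using solvable by (auto simp: Sol_def)

lemma Sol_iff: "z \<in> Sol \<longleftrightarrow> z \<in> dom_p \<and> (\<forall>y\<in>dom_p. F z \<le> F y)"
proof
  assume z: "z \<in> Sol"
  then have le: "obj A c lam h p z \<le> obj A c lam h p y" for y by (simp add: Sol_def)
  obtain y where y: "y \<in> dom_p" using dom_p_nonempty by blast
  have z_dom: "z \<in> dom_p"
  proof (rule ccontr)
    assume "z \<notin> dom_p"
    then show False using le[of y] obj_infinite[of z] obj_finite[OF y] by simp
  qed
  moreover have "F z \<le> F y" if "y \<in> dom_p" for y
    using le[of y] obj_finite[OF z_dom] obj_finite[OF that] by simp
  ultimately show "z \<in> dom_p \<and> (\<forall>y\<in>dom_p. F z \<le> F y)" by blast
next
  assume z: "z \<in> dom_p \<and> (\<forall>y\<in>dom_p. F z \<le> F y)"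
  have "obj A c lam h p z \<le> obj A c lam h p y" for y
  proof (cases "y \<in> dom_p")
    case True
    then show ?thesis using z by (simp add: obj_finite)
  next
    case False
    then show ?thesis by (simp add: obj_infinite)
  qed
  then show "z \<in> Sol" by (simp add: Sol_def)
qed

lemma Sol_le: "z \<in> Sol \<Longrightarrow> y \<in> dom_p \<Longrightarrow> F z \<le> F y"
  by (simp add: Sol_iff)

lemma F_bounded_below: "\<exists>m. \<forall>y\<in>dom_p. m \<le> F y"
  using Sol_nonempty Sol_le by blast

lemma F_convex: "convex_on dom_p F"
proof (rule convex_onI)
  have epi: "convex (epigraph p)" using p_convex by (simp add: ext_convex_def)
  have P: "(1 - t) *\<^sub>R x + t *\<^sub>R y \<in> dom_p \<and>
      p_real ((1 - t) *\<^sub>R x + t *\<^sub>R y) \<le> (1 - t) * p_real x + t * p_real y"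
    if "x \<in> dom_p" "y \<in> dom_p" "0 \<le> t" "t \<le> 1" for x y and t :: real
  proof -
    have "(x, p_real x) \<in> epigraph p" "(y, p_real y) \<in> epigraph p"
      using that p_finite by (auto simp: epigraph_def)
    from convexD[OF epi this, of "1 - t" t] that
    have "p ((1 - t) *\<^sub>R x + t *\<^sub>R y) \<le> ereal ((1 - t) * p_real x + t * p_real y)"
      by (simp add: epigraph_def)
    moreover from this have "(1 - t) *\<^sub>R x + t *\<^sub>R y \<in> dom_p" by (auto simp: dom_p_def)
    ultimately show ?thesis by (simp add: p_finite)
  qed
  show "convex dom_p"
    using P by (auto simp: convex_alt)
  fix t :: real and x y assume t: "0 < t" "t < 1" and xy: "x \<in> dom_p" "y \<in> dom_p"
  have "h (A *v ((1 - t) *\<^sub>R x + t *\<^sub>R y)) = h ((1 - t) *\<^sub>R (A *v x) + t *\<^sub>R (A *v y))"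
    by (simp add: matrix_vector_right_distrib matrix_vector_mult_scaleR)
  also have "\<dots> \<le> (1 - t) * h (A *v x) + t * h (A *v y)"
    using convex_onD[OF h_convex, of t] t by simp
  finally have "h (A *v ((1 - t) *\<^sub>R x + t *\<^sub>R y)) \<le> (1 - t) * h (A *v x) + t * h (A *v y)" .
  moreover have "lam * p_real ((1 - t) *\<^sub>R x + t *\<^sub>R y) \<le> lam * ((1 - t) * p_real x + t * p_real y)"
    using P[OF xy, of t] t lam_pos by (intro mult_left_mono) auto
  moreover have "c \<bullet> ((1 - t) *\<^sub>R x + t *\<^sub>R y) = (1 - t) * (c \<bullet> x) + t * (c \<bullet> y)"
    by (simp add: inner_add_right)
  ultimately show "F ((1 - t) *\<^sub>R x + t *\<^sub>R y) \<le> (1 - t) * F x + t * F y"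
    unfolding F_def by (simp add: algebra_simps)
qed

lemma F_lsc:
  assumes "\<And>n. y n \<in> dom_p" "y \<longlonglongrightarrow> l" "\<And>n. F (y n) \<le> t n" "t \<longlonglongrightarrow> t0"
  shows "l \<in> dom_p" "F l \<le> t0"
proof -
  define q where "q n = (t n - h (A *v y n) + c \<bullet> y n) / lam" for n
  have "isCont h (A *v l)" using h_cont by (simp add: continuous_on_eq_continuous_at)
  moreover have "(\<lambda>n. A *v y n) \<longlonglongrightarrow> A *v l"
    using assms(2) by (rule bounded_linear.tendsto[OF matrix_vector_mul_bounded_linear])
  ultimately have "(\<lambda>n. h (A *v y n)) \<longlonglongrightarrow> h (A *v l)" by (rule isCont_tendsto_compose)
  then have q_lim: "q \<longlonglongrightarrow> (t0 - h (A *v l) + c \<bullet> l) / lam"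
    unfolding q_def using lam_pos
    by (intro tendsto_divide tendsto_add tendsto_diff tendsto_inner tendsto_const assms(2,4)) auto
  have "p (y n) \<le> ereal (q n)" for n
    using assms(3)[of n] lam_pos p_finite[OF assms(1)] by (simp add: F_def q_def field_simps)
  then have pl: "p l \<le> ereal ((t0 - h (A *v l) + c \<bullet> l) / lam)"
    by (rule ext_closed_lsc[OF p_closed assms(2) q_lim])
  then show l: "l \<in> dom_p" by (auto simp: dom_p_def)
  have "lam * p_real l \<le> t0 - h (A *v l) + c \<bullet> l"
    using pl lam_pos by (simp add: p_finite[OF l] field_simps)
  then show "F l \<le> t0" unfolding F_def by linarith
qed

lemma bounded_linear_emb: "bounded_linear emb"
  unfolding emb_def
  by (intro bounded_linear_Pair bounded_linear_ident bounded_linear_const_scaleR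
      matrix_vector_mul_bounded_linear)

lemma emb_diff: "emb (x - y) = emb x - emb y"
  by (rule linear_diff[OF bounded_linear.linear[OF bounded_linear_emb]])

lemma norm_emb_sq: "(norm (emb v))\<^sup>2 = (norm v)\<^sup>2 + tau * (norm (A *v v))\<^sup>2"
  using tau_pos by (simp add: emb_def norm_Pair power_mult_distrib)

lemma inner_emb: "emb v \<bullet> emb w = (M *v v) \<bullet> w"
  using tau_pos
  by (simp add: emb_def M_def matrix_vector_mult_add_rdistrib inner_add_left
      scaleR_matrix_vector_assoc[symmetric] transpose_mult_self_inner)

lemma normM_eq_norm_emb: "normM M v = norm (emb v)"
  unfolding normM_def by (metis inner_emb inner_commute norm_eq_sqrt_inner)

lemma distM_eq_infdist_emb: "distM M x Sol = infdist (emb x) (emb ` Sol)"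
  unfolding distM_def infdist_def normM_eq_norm_emb using Sol_nonempty
  by (simp add: image_image dist_norm emb_diff)

lemma norm_le_norm_emb: "norm v \<le> norm (emb v)"
proof -
  have "0 \<le> tau * (norm (A *v v))\<^sup>2" using tau_pos by simp
  then have "(norm v)\<^sup>2 \<le> (norm (emb v))\<^sup>2" by (simp add: norm_emb_sq)
  then show ?thesis by (rule power2_le_imp_le) simp
qed

lemma zeta_ge_1: "zeta \<ge> 1"
  using tau_pos lambda_max_transpose_mult_self(2)[of A] by (simp add: zeta_def)

lemma norm_emb_le: "norm (emb v) \<le> sqrt zeta * norm v"
proof -
  have "tau * (norm (A *v v))\<^sup>2 \<le> tau * (lambda_max (transpose A ** A) * (norm v)\<^sup>2)"
    using lambda_max_transpose_mult_self(1)[of A v] tau_pos by (intro mult_left_mono) auto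
  then have "(norm (emb v))\<^sup>2 \<le> zeta * (norm v)\<^sup>2"
    by (simp add: norm_emb_sq zeta_def algebra_simps)
  then have "norm (emb v) \<le> sqrt (zeta * (norm v)\<^sup>2)" by (rule real_le_rsqrt)
  then show ?thesis by (simp add: real_sqrt_mult)
qed

lemma norm_M_le: "(norm (M *v w))\<^sup>2 \<le> zeta * (norm (emb w))\<^sup>2"
proof -
  let ?L = "lambda_max (transpose A ** A)"
  define X where "X = (norm w)\<^sup>2"
  define Y where "Y = (norm (A *v w))\<^sup>2"
  define Z where "Z = (norm ((transpose A ** A) *v w))\<^sup>2"
  have L: "(norm (A *v v))\<^sup>2 \<le> ?L * (norm v)\<^sup>2" for v by (rule lambda_max_transpose_mult_self(1))
  have "M *v w = w + tau *\<^sub>R ((transpose A ** A) *v w)"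
    by (simp add: M_def matrix_vector_mult_add_rdistrib scaleR_matrix_vector_assoc[symmetric])
  moreover have "w \<bullet> ((transpose A ** A) *v w) = ((transpose A ** A) *v w) \<bullet> w"
    by (rule inner_commute)
  then have "w \<bullet> ((transpose A ** A) *v w) = Y"
    by (simp add: Y_def power2_norm_eq_inner transpose_mult_self_inner)
  ultimately have "(norm (M *v w))\<^sup>2 = X + 2 * tau * Y + tau\<^sup>2 * Z"
    by (simp add: X_def Z_def power2_norm_add power_mult_distrib)
  moreover have "Z \<le> ?L * Y"
    using norm_transpose_le[OF L, of "A *v w"] by (simp add: Z_def Y_def matrix_vector_mul_assoc)
  then have "tau\<^sup>2 * Z \<le> tau\<^sup>2 * (?L * Y)" by (intro mult_left_mono) auto
  moreover have "tau * Y \<le> tau * (?L * X)"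
    using L[of w] tau_pos unfolding X_def Y_def by (intro mult_left_mono) auto
  ultimately have "(norm (M *v w))\<^sup>2 \<le> X + tau * Y + tau * (?L * X) + tau\<^sup>2 * (?L * Y)"
    by linarith
  also have "\<dots> = zeta * (norm (emb w))\<^sup>2"
    unfolding norm_emb_sq by (simp add: zeta_def X_def Y_def algebra_simps power2_eq_square)
  finally show ?thesis .
qed

lemma infdist_le_infdist_emb: "infdist v Sol \<le> infdist (emb v) (emb ` Sol)"
proof -
  have "infdist v Sol \<le> 1 * infdist (emb v) (emb ` Sol)"
  proof (rule le_mult_infdistI)
    fix b assume "b \<in> emb ` Sol"
    then obtain a where "a \<in> Sol" "b = emb a" by blast
    then show "infdist v Sol \<le> 1 * dist (emb v) b"
      using infdist_le[of a Sol v] norm_le_norm_emb[of "v - a"] by (simp add: dist_norm emb_diff)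
  qed (use Sol_nonempty in simp_all)
  then show ?thesis by simp
qed

lemma infdist_emb_le: "infdist (emb v) (emb ` Sol) \<le> sqrt zeta * infdist v Sol"
proof (rule le_mult_infdistI[OF Sol_nonempty])
  fix a assume "a \<in> Sol"
  then have "infdist (emb v) (emb ` Sol) \<le> norm (emb (v - a))"
    using infdist_le[of "emb a" "emb ` Sol" "emb v"] by (simp add: dist_norm emb_diff)
  also have "\<dots> \<le> sqrt zeta * dist v a" by (simp add: dist_norm norm_emb_le)
  finally show "infdist (emb v) (emb ` Sol) \<le> sqrt zeta * dist v a" .
qed (use zeta_ge_1 in simp)

lemma prox_obj_ge: "y \<in> dom_p \<Longrightarrow> s > 0 \<Longrightarrow> (\<forall>x\<in>dom_p. m \<le> F x) \<Longrightarrow>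
    m + (norm (y - xk))\<^sup>2 / (2 * s) \<le> prox_obj s xk y"
  unfolding prox_obj_def
  by (intro add_mono divide_right_mono power_mono norm_le_norm_emb) auto

lemma prox_obj_sublevel_bounded:
  assumes s: "s > 0"
  shows "bounded {y \<in> dom_p. prox_obj s xk y \<le> t}"
proof -
  obtain m where m: "\<forall>y\<in>dom_p. m \<le> F y" using F_bounded_below by blast
  have "norm y \<le> norm xk + sqrt (2 * s * (t - m))" if "y \<in> dom_p" "prox_obj s xk y \<le> t" for y
  proof -
    have "m + (norm (y - xk))\<^sup>2 / (2 * s) \<le> t" using prox_obj_ge[OF that(1) s m, of xk] that(2) by linarith
    then have "(norm (y - xk))\<^sup>2 \<le> 2 * s * (t - m)" using s by (simp add: field_simps)
    then have "norm (y - xk) \<le> sqrt (2 * s * (t - m))" by (rule real_le_rsqrt)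
    then show ?thesis using norm_triangle_sub[of y xk] by linarith
  qed
  then show ?thesis unfolding bounded_iff by blast
qed

lemma prox_obj_has_min:
  assumes s: "s > 0"
  shows "\<exists>xb\<in>dom_p. \<forall>y\<in>dom_p. prox_obj s xk xb \<le> prox_obj s xk y"
proof -
  obtain m where m: "\<forall>y\<in>dom_p. m \<le> F y" using F_bounded_below by blast
  let ?S = "prox_obj s xk ` dom_p"
  have "m \<le> prox_obj s xk y" if "y \<in> dom_p" for y
  proof -
    have "0 \<le> (norm (y - xk))\<^sup>2 / (2 * s)" using s by simp
    then show ?thesis using prox_obj_ge[OF that s m, of xk] by linarith
  qed
  then have "bdd_below ?S" by (intro bdd_belowI[of _ m]) auto
  then have \<mu>_le: "Inf ?S \<le> prox_obj s xk y" if "y \<in> dom_p" for y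
    using that by (intro cInf_lower) auto
  have "\<exists>y\<in>dom_p. prox_obj s xk y < Inf ?S + 1 / Suc n" for n
    using cInf_lessD[of ?S "Inf ?S + 1 / Suc n"] dom_p_nonempty by auto
  then obtain y where y: "\<And>n. y n \<in> dom_p" "\<And>n. prox_obj s xk (y n) < Inf ?S + 1 / Suc n"
    by metis
  have "prox_obj s xk (y n) \<le> Inf ?S + 1" for n
  proof -
    have "1 / real (Suc n) \<le> 1" by simp
    then show ?thesis using y(2)[of n] by linarith
  qed
  then have "range y \<subseteq> {y \<in> dom_p. prox_obj s xk y \<le> Inf ?S + 1}" using y(1) by auto
  then have "bounded (range y)" by (rule bounded_subset[OF prox_obj_sublevel_bounded[OF s]])
  then obtain l r where r: "strict_mono r" and "(y \<circ> r) \<longlonglongrightarrow> l"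
    using bounded_imp_convergent_subsequence by blast
  then have lim: "(\<lambda>n. y (r n)) \<longlonglongrightarrow> l" by (simp add: comp_def)
  have "(\<lambda>n. 1 / real (Suc (r n))) \<longlonglongrightarrow> 0"
    using LIMSEQ_subseq_LIMSEQ[OF LIMSEQ_inverse_real_of_nat r] by (simp add: comp_def inverse_eq_divide)
  then have "(\<lambda>n. Inf ?S + 1 / Suc (r n) - (norm (emb (y (r n) - xk)))\<^sup>2 / (2 * s))
      \<longlonglongrightarrow> Inf ?S + 0 - (norm (emb (l - xk)))\<^sup>2 / (2 * s)"
    using s by (intro tendsto_diff tendsto_add tendsto_const tendsto_divide tendsto_power tendsto_norm
        bounded_linear.tendsto[OF bounded_linear_emb] lim) auto
  then have t_lim: "(\<lambda>n. Inf ?S + 1 / Suc (r n) - (norm (emb (y (r n) - xk)))\<^sup>2 / (2 * s))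
      \<longlonglongrightarrow> Inf ?S - (norm (emb (l - xk)))\<^sup>2 / (2 * s)" by simp
  have F_le: "F (y (r n)) \<le> Inf ?S + 1 / Suc (r n) - (norm (emb (y (r n) - xk)))\<^sup>2 / (2 * s)" for n
    using y(2)[of "r n"] unfolding prox_obj_def by linarith
  note lsc = F_lsc[of "\<lambda>n. y (r n)", OF y(1) lim F_le t_lim]
  from lsc(2) have "prox_obj s xk l \<le> Inf ?S" by (simp add: prox_obj_def)
  then show ?thesis using lsc(1) \<mu>_le by (blast intro: order_trans)
qed

lemma prox_point:
  assumes "s > 0"
  shows "prox_point s xk \<in> dom_p" "\<And>y. y \<in> dom_p \<Longrightarrow> prox_obj s xk (prox_point s xk) \<le> prox_obj s xk y"
  using someI_ex[OF prox_obj_has_min[OF assms, of xk, unfolded Bex_def]]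
  unfolding prox_point_def by blast+

lemma prox_point_min:
  assumes "s > 0" "y \<in> dom_p"
  shows "F (prox_point s xk) + (norm (emb (prox_point s xk - xk)))\<^sup>2 / (2 * s)
    \<le> F y + (norm (emb (y - xk)))\<^sup>2 / (2 * s)"
  using prox_point(2)[OF assms] by (simp add: prox_obj_def)

lemma prox_point_variational_ineq:
  assumes s: "s > 0" and y: "y \<in> dom_p"
  shows "F (prox_point s xk) + (emb xk - emb (prox_point s xk)) \<bullet> (emb y - emb (prox_point s xk)) / s
    \<le> F y"
  by (rule proximal_subgradient_ineq[OF F_convex bounded_linear.linear[OF bounded_linear_emb]
        s prox_point(1)[OF s] prox_point_min[OF s] y])

lemma prox_point_subgradient:
  assumes s: "s > 0"
  shows "(1 / s) *\<^sub>R (M *v (xk - prox_point s xk)) \<in> subdiff (obj A c lam h p) (prox_point s xk)"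
proof -
  let ?xb = "prox_point s xk" and ?g = "(1 / s) *\<^sub>R (M *v (xk - prox_point s xk))"
  have "F ?xb + ?g \<bullet> (y - ?xb) \<le> F y" if y: "y \<in> dom_p" for y
  proof -
    have "(emb xk - emb ?xb) \<bullet> (emb y - emb ?xb) = (M *v (xk - ?xb)) \<bullet> (y - ?xb)"
      by (simp add: inner_emb emb_diff[symmetric])
    then show ?thesis
      using prox_point_variational_ineq[OF s y, of xk] by (simp add: divide_inverse mult.commute)
  qed
  then have "obj A c lam h p ?xb + ereal (?g \<bullet> (y - ?xb)) \<le> obj A c lam h p y" for y
    using prox_point(1)[OF s] by (cases "y \<in> dom_p") (simp_all add: obj_finite obj_infinite)
  then show ?thesis
    using prox_point(1)[OF s] by (simp add: subdiff_def obj_finite)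
qed

lemma prox_point_three_point:
  assumes s: "s > 0" and y: "y \<in> dom_p"
  shows "prox_obj s xk (prox_point s xk) + (norm (emb y - emb (prox_point s xk)))\<^sup>2 / (2 * s)
    \<le> prox_obj s xk y"
  using proximal_three_point_ineq[OF F_convex bounded_linear.linear[OF bounded_linear_emb] s
      prox_point(1)[OF s] prox_point_min[OF s] y]
  by (simp add: prox_obj_def)

lemma prox_point_fejer:
  assumes s: "s > 0" and z: "z \<in> Sol"
  shows "(norm (emb xk - emb (prox_point s xk)))\<^sup>2 + (norm (emb (prox_point s xk) - emb z))\<^sup>2
    \<le> (norm (emb xk - emb z))\<^sup>2"
proof -
  let ?xb = "prox_point s xk"
  have "z \<in> dom_p" using z Sol_iff by blast
  then have "prox_obj s xk ?xb + (norm (emb z - emb ?xb))\<^sup>2 / (2 * s) \<le> prox_obj s xk z"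
    by (rule prox_point_three_point[OF s])
  moreover have "F z \<le> F ?xb" using Sol_le[OF z prox_point(1)[OF s]] .
  ultimately have "((norm (emb ?xb - emb xk))\<^sup>2 + (norm (emb z - emb ?xb))\<^sup>2) / (2 * s)
      \<le> (norm (emb z - emb xk))\<^sup>2 / (2 * s)"
    unfolding prox_obj_def emb_diff add_divide_distrib by linarith
  then have "(norm (emb ?xb - emb xk))\<^sup>2 + (norm (emb z - emb ?xb))\<^sup>2 \<le> (norm (emb z - emb xk))\<^sup>2"
    using s by (simp add: divide_le_cancel)
  then show ?thesis by (simp add: norm_minus_commute)
qed

lemma prox_point_infdist_fejer:
  assumes cpt: "compact Sol" and s: "s > 0"
  shows "(infdist (emb (prox_point s xk)) (emb ` Sol))\<^sup>2 + (norm (emb xk - emb (prox_point s xk)))\<^sup>2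
    \<le> (infdist (emb xk) (emb ` Sol))\<^sup>2"
proof -
  let ?xb = "prox_point s xk" and ?S = "emb ` Sol"
  have "compact ?S" by (rule compact_continuous_image[OF linear_continuous_on[OF bounded_linear_emb] cpt])
  moreover have "?S \<noteq> {}" using Sol_nonempty by simp
  ultimately obtain w where "w \<in> ?S" "infdist (emb xk) ?S = dist (emb xk) w"
    using infdist_attains_inf[OF compact_imp_closed] by blast
  then obtain z where z: "z \<in> Sol" "infdist (emb xk) ?S = norm (emb xk - emb z)"
    by (auto simp: dist_norm)
  have "infdist (emb ?xb) ?S \<le> norm (emb ?xb - emb z)"
    using infdist_le[of "emb z" ?S] z(1) by (simp add: dist_norm)
  then have "(infdist (emb ?xb) ?S)\<^sup>2 \<le> (norm (emb ?xb - emb z))\<^sup>2"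
    by (rule power_mono) (simp add: infdist_nonneg)
  then show ?thesis using prox_point_fejer[OF s z(1), of xk] unfolding z(2) by linarith
qed

section \<open>Weak duality and the inexactness criteria\<close>

lemma fk_eq_prox_obj:
  assumes "s > 0"
  shows "x \<in> dom_p \<Longrightarrow> fk A c lam h p tau s xk x = ereal (prox_obj s xk x)"
    and "x \<notin> dom_p \<Longrightarrow> fk A c lam h p tau s xk x = \<infinity>"
  using assms
  by (simp_all add: fk_def prox_obj_def obj_finite obj_infinite norm_emb_sq emb_diff[symmetric]
      matrix_vector_mult_diff_distrib add_divide_distrib)

lemma moreau_env_terms_le:
  assumes s: "s > 0" and x: "x \<in> dom_p"
  shows "tau / s * moreau_env (\<lambda>y. ereal (s / tau * h y)) w
      \<le> h (A *v x) + tau / (2 * s) * (norm (A *v x - w))\<^sup>2"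
    and "1 / s * moreau_env (\<lambda>y. ereal (s * lam) * p y) z
      \<le> lam * p_real x + 1 / (2 * s) * (norm (x - z))\<^sup>2"
proof -
  obtain ah bh where ah: "\<And>y. ah \<bullet> y + bh \<le> h y"
    using convex_continuous_affine_minorant[OF h_convex h_cont] by blast
  obtain ap bp where ap: "\<And>y. ereal (ap \<bullet> y + bp) \<le> p y"
    using ext_proper_affine_minorant[OF p_closed p_convex p_proper] by blast
  have "ereal (((s / tau) *\<^sub>R ah) \<bullet> y + s / tau * bh) \<le> ereal (s / tau * h y)" for y
  proof -
    have "s / tau * (ah \<bullet> y + bh) \<le> s / tau * h y"
      using ah[of y] s tau_pos by (intro mult_left_mono) auto
    then show ?thesis by (simp add: distrib_left)
  qed
  then have "moreau_env (\<lambda>y. ereal (s / tau * h y)) w \<le> s / tau * h (A *v x) + 1/2 * (norm (A *v x - w))\<^sup>2"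
    by (rule moreau_env_le) simp
  then show "tau / s * moreau_env (\<lambda>y. ereal (s / tau * h y)) w
      \<le> h (A *v x) + tau / (2 * s) * (norm (A *v x - w))\<^sup>2"
    using s tau_pos mult_left_mono[of _ _ "tau / s"] by (fastforce simp: field_simps)
  have "ereal (((s * lam) *\<^sub>R ap) \<bullet> y + s * lam * bp) \<le> ereal (s * lam) * p y" for y
  proof -
    have "ereal (s * lam) * ereal (ap \<bullet> y + bp) \<le> ereal (s * lam) * p y"
      using ap[of y] s lam_pos by (intro ereal_mult_left_mono) auto
    then show ?thesis by (simp add: distrib_left)
  qed
  then have "moreau_env (\<lambda>y. ereal (s * lam) * p y) z \<le> s * lam * p_real x + 1/2 * (norm (x - z))\<^sup>2"
    by (rule moreau_env_le) (simp add: p_finite[OF x])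
  then show "1 / s * moreau_env (\<lambda>y. ereal (s * lam) * p y) z
      \<le> lam * p_real x + 1 / (2 * s) * (norm (x - z))\<^sup>2"
    using s mult_left_mono[of _ _ "1 / s"] by (fastforce simp: field_simps)
qed

text \<open>Bounding both Moreau envelopes in \<open>psik\<close> by their values at \<open>A x\<close> and \<open>x\<close>, the
  remaining quadratic terms recombine to the proximal term of \<open>prox_obj\<close>, with the
  contributions of \<open>u\<close> cancelling.\<close>

lemma psik_le_prox_obj:
  assumes s: "s > 0" and x: "x \<in> dom_p"
  shows "psik A c lam h p tau s xk u \<le> prox_obj s xk x"
proof -
  define w where "w = A *v xk + (s / tau) *\<^sub>R u"
  define z where "z = xk + s *\<^sub>R c - s *\<^sub>R (transpose A *v u)"
  note env = moreau_env_terms_le[OF s x]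
  have id_h: "(norm (A *v x - w))\<^sup>2 - (norm w)\<^sup>2 + (norm (A *v xk))\<^sup>2
      = (norm (A *v x - A *v xk))\<^sup>2 - 2 * (s / tau) * ((A *v x) \<bullet> u)"
    unfolding power2_norm_diff_shift by (simp add: w_def)
  have "x \<bullet> (z - xk) = s * (x \<bullet> c) - s * (x \<bullet> (transpose A *v u))"
    unfolding z_def by (simp add: inner_add_right inner_diff_right del: transpose_matrix_vector)
  also have "\<dots> = s * (c \<bullet> x) - s * ((A *v x) \<bullet> u)"
    by (simp only: inner_transpose inner_commute[of x c])
  finally have id_p: "(norm (x - z))\<^sup>2 - (norm z)\<^sup>2 + (norm xk)\<^sup>2
      = (norm (x - xk))\<^sup>2 - 2 * s * (c \<bullet> x) + 2 * s * ((A *v x) \<bullet> u)"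
    unfolding power2_norm_diff_shift by (simp add: algebra_simps)
  have "psik A c lam h p tau s xk u
      = - tau / (2 * s) * (norm w)\<^sup>2 + tau / s * moreau_env (\<lambda>y. ereal (s / tau * h y)) w
        + tau / (2 * s) * (norm (A *v xk))\<^sup>2 - 1 / (2 * s) * (norm z)\<^sup>2
        + 1 / s * moreau_env (\<lambda>y. ereal (s * lam) * p y) z + 1 / (2 * s) * (norm xk)\<^sup>2"
    by (simp add: psik_def Let_def w_def z_def)
  also have "\<dots> \<le> h (A *v x) + lam * p_real x
      + tau / (2 * s) * ((norm (A *v x - w))\<^sup>2 - (norm w)\<^sup>2 + (norm (A *v xk))\<^sup>2)
      + 1 / (2 * s) * ((norm (x - z))\<^sup>2 - (norm z)\<^sup>2 + (norm xk)\<^sup>2)"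
    using env(1)[of w] env(2)[of z] by (simp add: algebra_simps)
  also have "\<dots> = prox_obj s xk x"
    unfolding id_h id_p using s tau_pos
    by (simp add: prox_obj_def F_def norm_emb_sq emb_diff[symmetric]
        matrix_vector_mult_diff_distrib field_simps)
  finally show ?thesis .
qed

lemma dual_gap_bound:
  assumes s: "s > 0" and gap: "dual_gap s xk x' u \<le> ereal R"
  shows "x' \<in> dom_p" "(norm (emb x' - emb (prox_point s xk)))\<^sup>2 / (2 * s) \<le> R"
proof -
  show x': "x' \<in> dom_p"
    using gap fk_eq_prox_obj(2)[OF s, of x' xk] by (cases "x' \<in> dom_p") (auto simp: dual_gap_def)
  let ?xb = "prox_point s xk"
  have "prox_obj s xk x' - psik A c lam h p tau s xk u \<le> R"
    using gap fk_eq_prox_obj(1)[OF s x'] by (simp add: dual_gap_def)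
  moreover have "psik A c lam h p tau s xk u \<le> prox_obj s xk ?xb"
    by (rule psik_le_prox_obj[OF s prox_point(1)[OF s]])
  moreover have "prox_obj s xk ?xb + (norm (emb x' - emb ?xb))\<^sup>2 / (2 * s) \<le> prox_obj s xk x'"
    by (rule prox_point_three_point[OF s x'])
  ultimately show "(norm (emb x' - emb ?xb))\<^sup>2 / (2 * s) \<le> R" by linarith
qed

lemma criterion_A_bound:
  assumes s: "s > 0" and e: "e \<ge> 0" and gap: "dual_gap s xk x' u \<le> ereal (e\<^sup>2 / (2 * s))"
  shows "norm (emb x' - emb (prox_point s xk)) \<le> e"
proof -
  have "(norm (emb x' - emb (prox_point s xk)))\<^sup>2 \<le> e\<^sup>2"
    using dual_gap_bound(2)[OF s gap] s by (simp add: divide_le_cancel)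
  then show ?thesis using e by (rule power2_le_imp_le)
qed

lemma criterion_B_bound:
  assumes s: "s > 0" and dl: "dl \<ge> 0"
    and gap: "dual_gap s xk x' u \<le> ereal (dl\<^sup>2 / (2 * s) * (norm (x' - xk))\<^sup>2
      + tau * dl\<^sup>2 / (2 * s) * (norm (A *v x' - A *v xk))\<^sup>2)"
  shows "norm (emb x' - emb (prox_point s xk)) \<le> dl * norm (emb x' - emb xk)"
proof -
  have "dl\<^sup>2 / (2 * s) * (norm (x' - xk))\<^sup>2 + tau * dl\<^sup>2 / (2 * s) * (norm (A *v x' - A *v xk))\<^sup>2
      = (dl * norm (emb x' - emb xk))\<^sup>2 / (2 * s)"
    using s by (simp add: emb_diff[symmetric] power_mult_distrib norm_emb_sq matrix_vector_mult_diff_distrib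
        field_simps)
  then have "(norm (emb x' - emb (prox_point s xk)))\<^sup>2 / (2 * s) \<le> (dl * norm (emb x' - emb xk))\<^sup>2 / (2 * s)"
    using dual_gap_bound(2)[OF s gap] by simp
  then have "(norm (emb x' - emb (prox_point s xk)))\<^sup>2 \<le> (dl * norm (emb x' - emb xk))\<^sup>2"
    using s by (simp add: divide_le_cancel)
  then show ?thesis by (rule power2_le_imp_le) (use dl in simp)
qed

section \<open>Convergence under criterion (A)\<close>

context
  fixes \<sigma> \<epsilon> :: "nat \<Rightarrow> real" and x :: "nat \<Rightarrow> real^'n" and u :: "nat \<Rightarrow> real^'m"
  assumes \<sigma>_pos: "\<And>k. \<sigma> k > 0" and \<sigma>_mono: "mono \<sigma>"
    and \<epsilon>_nonneg: "\<And>k. \<epsilon> k \<ge> 0" and \<epsilon>_summable: "summable \<epsilon>"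
    and criterion_A: "\<And>k. dual_gap (\<sigma> k) (x k) (x (Suc k)) (u (Suc k)) \<le> ereal ((\<epsilon> k)\<^sup>2 / (2 * \<sigma> k))"
begin

lemma iterates_quasi_fejer:
  assumes z: "z \<in> Sol"
  shows "norm (emb (x (Suc k)) - emb z) \<le> norm (emb (x k) - emb z) + \<epsilon> k"
proof -
  let ?xb = "prox_point (\<sigma> k) (x k)"
  have "(norm (emb ?xb - emb z))\<^sup>2 \<le> (norm (emb (x k) - emb z))\<^sup>2"
    using prox_point_fejer[OF \<sigma>_pos[of k] z, of "x k"] zero_le_power2[of "norm (emb (x k) - emb ?xb)"]
    by linarith
  then have xb: "norm (emb ?xb - emb z) \<le> norm (emb (x k) - emb z)" by (rule power2_le_imp_le) simp
  have "norm (emb (x (Suc k)) - emb ?xb) \<le> \<epsilon> k"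
    by (rule criterion_A_bound[OF \<sigma>_pos \<epsilon>_nonneg criterion_A])
  from norm_diff_triangle_le[OF this xb] show ?thesis by simp
qed

lemma iterates_bounded: "bounded (range x)"
proof -
  obtain z where z: "z \<in> Sol" using Sol_nonempty by blast
  have "norm (x k) \<le> norm z + (norm (emb (x 0) - emb z) + suminf \<epsilon>)" for k
  proof -
    have "norm (x k - z) \<le> norm (emb (x k) - emb z)"
      using norm_le_norm_emb[of "x k - z"] by (simp add: emb_diff)
    also have "\<dots> \<le> norm (emb (x 0) - emb z) + suminf \<epsilon>"
      using iterates_quasi_fejer[OF z] \<epsilon>_nonneg \<epsilon>_summable by (rule quasi_fejer_bound)
    finally show ?thesis using norm_triangle_sub[of "x k" z] by linarith
  qed
  then show ?thesis unfolding bounded_iff by blast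
qed

lemma iterates_dist_convergent: "z \<in> Sol \<Longrightarrow> convergent (\<lambda>k. norm (emb (x k) - emb z))"
  using iterates_quasi_fejer \<epsilon>_nonneg \<epsilon>_summable by (intro quasi_fejer_convergent) auto

text \<open>The step to the exact proximal point vanishes: by the Fejer inequality its square is
  at most the drop of the squared distance to a solution from \<open>x k\<close> to the proximal point,
  and both distances have the same limit.\<close>

lemma prox_step_tendsto_0: "(\<lambda>k. norm (emb (x k) - emb (prox_point (\<sigma> k) (x k)))) \<longlonglongrightarrow> 0"
proof -
  obtain z where z: "z \<in> Sol" using Sol_nonempty by blast
  define a where "a k = norm (emb (x k) - emb z)" for k
  define b where "b k = norm (emb (prox_point (\<sigma> k) (x k)) - emb z)" for k
  define g where "g k = norm (emb (x k) - emb (prox_point (\<sigma> k) (x k)))" for k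
  have fejer: "(g k)\<^sup>2 + (b k)\<^sup>2 \<le> (a k)\<^sup>2" for k
    unfolding a_def b_def g_def by (rule prox_point_fejer[OF \<sigma>_pos z])
  obtain L where aL: "a \<longlonglongrightarrow> L"
    using iterates_dist_convergent[OF z] unfolding a_def convergent_def by blast
  have bL: "b \<longlonglongrightarrow> L"
  proof (rule tendsto_sandwich[of "\<lambda>k. a (Suc k) - \<epsilon> k" _ _ a])
    have "a (Suc k) \<le> \<epsilon> k + b k" for k
      unfolding a_def b_def
      by (rule norm_diff_triangle_le[OF criterion_A_bound[OF \<sigma>_pos \<epsilon>_nonneg criterion_A] order_refl])
    then show "\<forall>\<^sub>F k in sequentially. a (Suc k) - \<epsilon> k \<le> b k" by (simp add: algebra_simps)
    have "b k \<le> a k" for k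
    proof -
      have "(b k)\<^sup>2 \<le> (a k)\<^sup>2" using fejer[of k] zero_le_power2[of "g k"] by linarith
      then show ?thesis by (rule power2_le_imp_le) (simp add: a_def)
    qed
    then show "\<forall>\<^sub>F k in sequentially. b k \<le> a k" by simp
    show "(\<lambda>k. a (Suc k) - \<epsilon> k) \<longlonglongrightarrow> L"
      using tendsto_diff[OF LIMSEQ_Suc[OF aL] summable_LIMSEQ_zero[OF \<epsilon>_summable]] by simp
  qed (rule aL)
  have "(\<lambda>k. (a k)\<^sup>2 - (b k)\<^sup>2) \<longlonglongrightarrow> L\<^sup>2 - L\<^sup>2" by (intro tendsto_diff tendsto_power aL bL)
  then have lim: "(\<lambda>k. (a k)\<^sup>2 - (b k)\<^sup>2) \<longlonglongrightarrow> 0" by simp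
  have le: "(g k)\<^sup>2 \<le> (a k)\<^sup>2 - (b k)\<^sup>2" for k using fejer[of k] by linarith
  have "(\<lambda>k. (g k)\<^sup>2) \<longlonglongrightarrow> 0"
  proof (rule tendsto_sandwich[of "\<lambda>k. 0" _ _ "\<lambda>k. (a k)\<^sup>2 - (b k)\<^sup>2"])
    show "\<forall>\<^sub>F k in sequentially. (g k)\<^sup>2 \<le> (a k)\<^sup>2 - (b k)\<^sup>2" using le by simp
  qed (simp_all add: lim)
  then have "(\<lambda>k. sqrt ((g k)\<^sup>2)) \<longlonglongrightarrow> sqrt 0" by (rule tendsto_real_sqrt)
  then show ?thesis by (simp add: g_def[abs_def])
qed

text \<open>A cluster point \<open>l\<close> of the iterates is also the limit of the corresponding exact
  proximal points; passing to the limit in their variational inequalities (using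
  \<open>\<sigma> k \<ge> \<sigma> 0\<close>) shows that \<open>l\<close> minimises \<open>F\<close>.\<close>

lemma cluster_point_in_Sol:
  assumes r: "strict_mono r" and lim: "(\<lambda>n. x (r n)) \<longlonglongrightarrow> l"
  shows "l \<in> Sol"
proof -
  define xb where "xb n = prox_point (\<sigma> (r n)) (x (r n))" for n
  define g where "g n = norm (emb (x (r n)) - emb (xb n))" for n
  have g: "g \<longlonglongrightarrow> 0"
    using LIMSEQ_subseq_LIMSEQ[OF prox_step_tendsto_0 r] by (simp add: g_def[abs_def] xb_def comp_def)
  have "norm (xb n - x (r n)) \<le> g n" for n
    using norm_le_norm_emb[of "xb n - x (r n)"] by (simp add: g_def emb_diff norm_minus_commute)
  then have "(\<lambda>n. xb n - x (r n)) \<longlonglongrightarrow> 0"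
    by (intro tendsto_0_le[OF g, of _ 1] always_eventually allI) (simp add: g_def)
  from tendsto_add[OF lim this] have xb_lim: "xb \<longlonglongrightarrow> l" by simp
  have "l \<in> dom_p \<and> F l \<le> F y" if y: "y \<in> dom_p" for y
  proof -
    define \<rho> where "\<rho> n = (emb (x (r n)) - emb (xb n)) \<bullet> (emb y - emb (xb n)) / \<sigma> (r n)" for n
    have bound: "\<bar>\<rho> n\<bar> \<le> g n * norm (emb y - emb (xb n)) / \<sigma> 0" for n
    proof -
      have "\<bar>\<rho> n\<bar> \<le> g n * norm (emb y - emb (xb n)) / \<sigma> (r n)"
        unfolding \<rho>_def g_def using \<sigma>_pos[of "r n"]
        by (simp add: abs_div divide_right_mono Cauchy_Schwarz_ineq2)
      also have "\<dots> \<le> g n * norm (emb y - emb (xb n)) / \<sigma> 0"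
        using \<sigma>_pos[of 0] monoD[OF \<sigma>_mono, of 0 "r n"] by (intro divide_left_mono) (auto simp: g_def)
      finally show ?thesis .
    qed
    have "(\<lambda>n. g n * norm (emb y - emb (xb n)) / \<sigma> 0) \<longlonglongrightarrow> 0 * norm (emb y - emb l) / \<sigma> 0"
      by (intro tendsto_divide tendsto_mult tendsto_norm tendsto_diff tendsto_const g
          bounded_linear.tendsto[OF bounded_linear_emb xb_lim]) (use \<sigma>_pos[of 0] in auto)
    then have lim: "(\<lambda>n. g n * norm (emb y - emb (xb n)) / \<sigma> 0) \<longlonglongrightarrow> 0" by simp
    have "\<rho> \<longlonglongrightarrow> 0"
      by (rule tendsto_0_le[OF lim, of \<rho> 1])
        (use bound \<sigma>_pos[of 0] in \<open>simp add: g_def abs_mult\<close>)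
    then have t_lim: "(\<lambda>n. F y - \<rho> n) \<longlonglongrightarrow> F y"
      using tendsto_diff[OF tendsto_const, of \<rho> 0 _ "F y"] by simp
    have F_le: "F (xb n) \<le> F y - \<rho> n" for n
      using prox_point_variational_ineq[OF \<sigma>_pos[of "r n"] y, of "x (r n)"]
      unfolding \<rho>_def xb_def by linarith
    have dom: "xb n \<in> dom_p" for n using prox_point(1)[OF \<sigma>_pos] by (simp add: xb_def)
    show ?thesis using F_lsc[OF dom xb_lim F_le t_lim] by simp
  qed
  then show ?thesis using dom_p_nonempty by (auto simp: Sol_iff)
qed

lemma iterates_converge: "\<exists>xs\<in>Sol. x \<longlonglongrightarrow> xs"
proof -
  obtain l r where r: "strict_mono r" and "(x \<circ> r) \<longlonglongrightarrow> l"
    using bounded_imp_convergent_subsequence[OF iterates_bounded] by blast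
  then have lim: "(\<lambda>n. x (r n)) \<longlonglongrightarrow> l" by (simp add: comp_def)
  have l: "l \<in> Sol" by (rule cluster_point_in_Sol[OF r lim])
  have sub: "((\<lambda>k. emb (x k)) \<circ> r) \<longlonglongrightarrow> emb l"
    using bounded_linear.tendsto[OF bounded_linear_emb lim] by (simp add: comp_def)
  have "convergent (\<lambda>k. dist (emb (x k)) (emb l))"
    using iterates_dist_convergent[OF l] by (simp add: dist_norm)
  then have "(\<lambda>k. emb (x k)) \<longlonglongrightarrow> emb l" by (rule LIMSEQ_if_convergent_dist_subseq[OF _ r sub])
  then have "(\<lambda>k. fst (emb (x k))) \<longlonglongrightarrow> fst (emb l)" by (rule tendsto_fst)
  then show ?thesis using l by (auto simp: emb_def)
qed

end

section \<open>Linear rate under criteria (A) and (B)\<close>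

lemma infdist_emb_prox_point_le:
  assumes s: "s > 0" and \<kappa>: "\<kappa> \<ge> 0"
    and error_bound: "infdist (prox_point s xk) Sol
      \<le> \<kappa> * infdist 0 (subdiff (obj A c lam h p) (prox_point s xk))"
  shows "infdist (emb (prox_point s xk)) (emb ` Sol) \<le> \<kappa> * zeta * norm (emb xk - emb (prox_point s xk)) / s"
proof -
  let ?xb = "prox_point s xk"
  have "(norm (M *v (xk - ?xb)))\<^sup>2 \<le> (sqrt zeta * norm (emb xk - emb ?xb))\<^sup>2"
    using norm_M_le[of "xk - ?xb"] zeta_ge_1 by (simp add: power_mult_distrib emb_diff)
  then have "norm (M *v (xk - ?xb)) \<le> sqrt zeta * norm (emb xk - emb ?xb)"
    by (rule power2_le_imp_le) (use zeta_ge_1 in simp)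
  then have "norm (M *v (xk - ?xb)) / s \<le> sqrt zeta * norm (emb xk - emb ?xb) / s"
    using s by (simp add: divide_right_mono)
  moreover have "infdist 0 (subdiff (obj A c lam h p) ?xb) \<le> norm (M *v (xk - ?xb)) / s"
    using infdist_le[OF prox_point_subgradient[OF s], of 0] s by simp
  ultimately have "infdist 0 (subdiff (obj A c lam h p) ?xb) \<le> sqrt zeta * norm (emb xk - emb ?xb) / s"
    by linarith
  then have "\<kappa> * infdist 0 (subdiff (obj A c lam h p) ?xb)
      \<le> \<kappa> * (sqrt zeta * norm (emb xk - emb ?xb) / s)"
    using \<kappa> by (rule mult_left_mono)
  with error_bound have "infdist ?xb Sol \<le> \<kappa> * (sqrt zeta * norm (emb xk - emb ?xb) / s)"
    by (rule order_trans)
  then have "sqrt zeta * infdist ?xb Sol \<le> sqrt zeta * (\<kappa> * (sqrt zeta * norm (emb xk - emb ?xb) / s))"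
    using zeta_ge_1 by (intro mult_left_mono) simp_all
  then have "infdist (emb ?xb) (emb ` Sol) \<le> sqrt zeta * (\<kappa> * (sqrt zeta * norm (emb xk - emb ?xb) / s))"
    using infdist_emb_le[of ?xb] by linarith
  also have "\<dots> = \<kappa> * zeta * norm (emb xk - emb ?xb) / s" using zeta_ge_1 by simp
  finally show ?thesis .
qed

lemma linear_rate_step:
  assumes cpt: "compact Sol" and s: "s > 0" and dl: "0 \<le> dl" "dl < 1" and \<kappa>: "\<kappa> > 0" and e: "e \<ge> 0"
    and error_bound: "\<forall>z. infdist z Sol \<le> R \<longrightarrow> subdiff (obj A c lam h p) z \<noteq> {} \<longrightarrow>
      infdist z Sol \<le> \<kappa> * infdist 0 (subdiff (obj A c lam h p) z)"
    and near: "distM M xk Sol \<le> R"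
    and crit_A: "dual_gap s xk x' u \<le> ereal (e\<^sup>2 / (2 * s))"
    and crit_B: "dual_gap s xk x' u \<le> ereal (dl\<^sup>2 / (2 * s) * (norm (x' - xk))\<^sup>2
      + tau * dl\<^sup>2 / (2 * s) * (norm (A *v x' - A *v xk))\<^sup>2)"
  shows "distM M x' Sol
      \<le> 1 / (1 - dl) * (dl + (1 + dl) * \<kappa> * zeta / sqrt (s\<^sup>2 + \<kappa>\<^sup>2 * zeta\<^sup>2)) * distM M xk Sol"
    and "distM M x' Sol \<le> distM M xk Sol + e"
proof -
  let ?xb = "prox_point s xk" and ?S = "emb ` Sol"
  define d where "d = infdist (emb xk) ?S"
  define d' where "d' = infdist (emb x') ?S"
  define Db where "Db = infdist (emb ?xb) ?S"
  define sg where "sg = norm (emb xk - emb ?xb)"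
  define e' where "e' = norm (emb x' - emb ?xb)"
  have fejer: "Db\<^sup>2 \<le> d\<^sup>2 - sg\<^sup>2"
    using prox_point_infdist_fejer[OF cpt s, of xk] unfolding Db_def d_def sg_def by linarith
  then have "Db\<^sup>2 \<le> d\<^sup>2" using zero_le_power2[of sg] by linarith
  then have "Db \<le> d" by (rule power2_le_imp_le) (simp add: d_def infdist_nonneg)
  then have "infdist ?xb Sol \<le> R"
    using infdist_le_infdist_emb[of ?xb] near by (simp add: Db_def d_def distM_eq_infdist_emb)
  then have "infdist ?xb Sol \<le> \<kappa> * infdist 0 (subdiff (obj A c lam h p) ?xb)"
    using error_bound prox_point_subgradient[OF s] by blast
  then have Db_bound: "Db \<le> (\<kappa> * zeta) * sg / s"
    unfolding Db_def sg_def by (rule infdist_emb_prox_point_le[OF s less_imp_le[OF \<kappa>]])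
  have "e' \<le> dl * norm (emb x' - emb xk)"
    unfolding e'_def by (rule criterion_B_bound[OF s dl(1) crit_B])
  also have "\<dots> \<le> dl * (e' + sg)"
    using norm_diff_triangle_le[of "emb x'" "emb ?xb" e' "emb xk" sg] dl
    by (intro mult_left_mono) (auto simp: e'_def sg_def norm_minus_commute)
  finally have inexact: "e' \<le> dl * (e' + sg)" .
  have triangle: "d' \<le> Db + e'"
    unfolding d'_def Db_def e'_def using infdist_triangle[of "emb x'" ?S "emb ?xb"]
    by (simp add: dist_norm)
  have "d' \<le> 1 / (1 - dl) * (dl + (1 + dl) * (\<kappa> * zeta) / sqrt (s\<^sup>2 + (\<kappa> * zeta)\<^sup>2)) * d"
    by (rule contraction_factor_bound[OF dl _ s _ _ _ fejer Db_bound inexact triangle])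
      (use zeta_ge_1 \<kappa> in \<open>auto simp: Db_def sg_def d_def infdist_nonneg\<close>)
  then show "distM M x' Sol
      \<le> 1 / (1 - dl) * (dl + (1 + dl) * \<kappa> * zeta / sqrt (s\<^sup>2 + \<kappa>\<^sup>2 * zeta\<^sup>2)) * distM M xk Sol"
    by (simp add: distM_eq_infdist_emb d_def d'_def mult.assoc power_mult_distrib)
  have "e' \<le> e" unfolding e'_def by (rule criterion_A_bound[OF s e crit_A])
  then show "distM M x' Sol \<le> distM M xk Sol + e"
    using triangle \<open>Db \<le> d\<close> by (simp add: distM_eq_infdist_emb d_def d'_def)
qed

lemma linear_convergence:
  fixes \<sigma> \<epsilon> \<delta> :: "nat \<Rightarrow> real" and x :: "nat \<Rightarrow> real^'n" and u :: "nat \<Rightarrow> real^'m"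
  assumes cpt: "compact Sol" and \<sigma>: "\<And>k. \<sigma> k > 0" "mono \<sigma>"
    and \<epsilon>: "\<And>k. \<epsilon> k \<ge> 0" "summable \<epsilon>"
    and \<delta>: "\<And>k. \<delta> k \<ge> 0" "summable \<delta>" "\<And>k. \<delta> k < 1" and \<kappa>: "\<kappa> > 0"
    and error_bound: "\<forall>z. infdist z Sol \<le> suminf \<epsilon> + distM M (x 0) Sol \<longrightarrow>
      subdiff (obj A c lam h p) z \<noteq> {} \<longrightarrow> infdist z Sol \<le> \<kappa> * infdist 0 (subdiff (obj A c lam h p) z)"
    and crit_A: "\<And>k. dual_gap (\<sigma> k) (x k) (x (Suc k)) (u (Suc k)) \<le> ereal ((\<epsilon> k)\<^sup>2 / (2 * \<sigma> k))"
    and crit_B: "\<And>k. dual_gap (\<sigma> k) (x k) (x (Suc k)) (u (Suc k))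
      \<le> ereal ((\<delta> k)\<^sup>2 / (2 * \<sigma> k) * (norm (x (Suc k) - x k))\<^sup>2
        + tau * (\<delta> k)\<^sup>2 / (2 * \<sigma> k) * (norm (A *v x (Suc k) - A *v x k))\<^sup>2)"
  shows "let \<mu> = (\<lambda>k. (1 / (1 - \<delta> k)) * (\<delta> k + (1 + \<delta> k) * \<kappa> * zeta
                      / sqrt ((\<sigma> k)\<^sup>2 + \<kappa>\<^sup>2 * zeta\<^sup>2)));
             \<mu>_lim = (if (SUP k. ereal (\<sigma> k)) = \<infinity> then 0
                   else \<kappa> * zeta / sqrt ((real_of_ereal (SUP k. ereal (\<sigma> k)))\<^sup>2 + \<kappa>\<^sup>2 * zeta\<^sup>2))
         in (\<forall>k. distM M (x (Suc k)) Sol \<le> \<mu> k * distM M (x k) Sol) \<and> \<mu> \<longlonglongrightarrow> \<mu>_lim \<and> \<mu>_lim < 1"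
proof -
  define R where "R = suminf \<epsilon> + distM M (x 0) Sol"
  note step = linear_rate_step[OF cpt \<sigma>(1) \<delta>(1,3) \<kappa> \<epsilon>(1) error_bound[folded R_def] _ crit_A crit_B]
  have bound: "distM M (x k) Sol \<le> distM M (x 0) Sol + (\<Sum>j<k. \<epsilon> j)" for k
  proof (induction k)
    case (Suc k)
    have "(\<Sum>j<k. \<epsilon> j) \<le> suminf \<epsilon>" using \<epsilon> by (intro sum_le_suminf) auto
    then have "distM M (x k) Sol \<le> R" using Suc by (simp add: R_def)
    then have "distM M (x (Suc k)) Sol \<le> distM M (x k) Sol + \<epsilon> k" by (rule step(2))
    then show ?case using Suc by simp
  qed simp
  have "distM M (x k) Sol \<le> R" for k
  proof -
    have "(\<Sum>j<k. \<epsilon> j) \<le> suminf \<epsilon>" using \<epsilon> by (intro sum_le_suminf) auto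
    then show ?thesis using bound[of k] unfolding R_def by linarith
  qed
  then have rate: "distM M (x (Suc k)) Sol \<le> (1 / (1 - \<delta> k)) * (\<delta> k + (1 + \<delta> k) * \<kappa> * zeta
      / sqrt ((\<sigma> k)\<^sup>2 + \<kappa>\<^sup>2 * zeta\<^sup>2)) * distM M (x k) Sol" for k
    by (rule step(1))
  have K: "\<kappa> * zeta > 0" using \<kappa> zeta_ge_1 by simp
  have K2: "(\<kappa> * zeta)\<^sup>2 = \<kappa>\<^sup>2 * zeta\<^sup>2" by (simp add: power_mult_distrib)
  note limit = rate_factor_limit[OF \<sigma> summable_LIMSEQ_zero[OF \<delta>(2)] K, unfolded K2 mult.assoc[symmetric]]
  show ?thesis
    unfolding Let_def using rate limit by blast
qed

end

theorem theorem2p1: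
  fixes A :: "real^'n^'m" and c :: "real^'n" and lam tau :: real
    and h :: "real^'m \<Rightarrow> real" and p :: "real^'n \<Rightarrow> ereal"
    and sigma eps delta :: "nat \<Rightarrow> real"
    and x :: "nat \<Rightarrow> real^'n" and u :: "nat \<Rightarrow> real^'m"
  defines "f \<equiv> obj A c lam h p"
  defines "Omega \<equiv> {z. \<forall>y. f z \<le> f y}"
  defines "sigma_inf \<equiv> (SUP k. ereal (sigma k))"
  defines "M \<equiv> mat 1 + tau *\<^sub>R (transpose A ** A)"
  defines "zeta \<equiv> 1 + tau * lambda_max (transpose A ** A)"
  assumes lam_pos: "lam > 0"
    and h_convex: "convex_on UNIV h" and h_C2: "C2_fun h"
    and p_closed: "ext_closed p" and p_proper: "ext_proper p" and p_convex: "ext_convex p"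
    and Omega_ne: "Omega \<noteq> {}" and Omega_compact: "compact Omega"
    and tau_pos: "tau > 0"
    and sigma_pos: "\<forall>k. sigma k > 0" and sigma_mono: "mono sigma"
    and eps_nonneg: "\<forall>k. eps k \<ge> 0" and eps_summable: "summable eps"
    and delta_nonneg: "\<forall>k. delta k \<ge> 0" and delta_summable: "summable delta"
    and delta_lt1: "\<forall>k. delta k < 1"
    and iter: "\<forall>k. x (Suc k) = prox (\<lambda>y. ereal (sigma k * lam) * p y)
                   (x k + sigma k *\<^sub>R c - sigma k *\<^sub>R (transpose A *v u (Suc k)))"
  shows
    "((\<forall>k. fk A c lam h p tau (sigma k) (x k) (x (Suc k))
              - ereal (psik A c lam h p tau (sigma k) (x k) (u (Suc k)))
            \<le> ereal ((eps k)\<^sup>2 / (2 * sigma k)))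
       \<longrightarrow> bounded (range x) \<and> (\<exists>xs\<in>Omega. x \<longlonglongrightarrow> xs))
     \<and>
     (\<forall>kappa>0.
        (\<forall>z. infdist z Omega \<le> suminf eps + distM M (x 0) Omega \<longrightarrow> subdiff f z \<noteq> {} \<longrightarrow>
             infdist z Omega \<le> kappa * infdist 0 (subdiff f z))
        \<longrightarrow> (\<forall>k. fk A c lam h p tau (sigma k) (x k) (x (Suc k))
                  - ereal (psik A c lam h p tau (sigma k) (x k) (u (Suc k)))
                \<le> ereal ((eps k)\<^sup>2 / (2 * sigma k)))
        \<longrightarrow> (\<forall>k. fk A c lam h p tau (sigma k) (x k) (x (Suc k))
                  - ereal (psik A c lam h p tau (sigma k) (x k) (u (Suc k)))
                \<le> ereal ((delta k)\<^sup>2 / (2 * sigma k) * (norm (x (Suc k) - x k))\<^sup>2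
                         + tau * (delta k)\<^sup>2 / (2 * sigma k) * (norm (A *v x (Suc k) - A *v x k))\<^sup>2))
        \<longrightarrow> (let mu = (\<lambda>k. (1 / (1 - delta k)) * (delta k + (1 + delta k) * kappa * zeta
                              / sqrt ((sigma k)\<^sup>2 + kappa\<^sup>2 * zeta\<^sup>2)));
                 mu_inf = (if sigma_inf = \<infinity> then 0
                           else kappa * zeta / sqrt ((real_of_ereal sigma_inf)\<^sup>2 + kappa\<^sup>2 * zeta\<^sup>2))
             in (\<forall>k. distM M (x (Suc k)) Omega \<le> mu k * distM M (x k) Omega)
                \<and> mu \<longlonglongrightarrow> mu_inf \<and> mu_inf < 1))"
proof -
  interpret P: composite_problem A c lam tau h p
    using lam_pos tau_pos h_convex C2_fun_continuous[OF h_C2] p_closed p_proper p_convex Omega_ne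
    by unfold_locales (auto simp: Omega_def f_def)
  have Sol: "P.Sol = Omega" by (simp add: P.Sol_def Omega_def f_def)
  have P_defs: "P.M = M" "P.zeta = zeta" "obj A c lam h p = f"
      "P.dual_gap s xk x' u' = fk A c lam h p tau s xk x' - ereal (psik A c lam h p tau s xk u')"
    for s xk x' u' by (simp_all add: P.M_def M_def P.zeta_def zeta_def f_def P.dual_gap_def)
  show ?thesis
    using P.iterates_bounded[where \<sigma> = sigma and \<epsilon> = eps and x = x and u = u]
      P.iterates_converge[where \<sigma> = sigma and \<epsilon> = eps and x = x and u = u]
      P.linear_convergence[where \<sigma> = sigma and \<epsilon> = eps and \<delta> = delta and x = x and u = u]
      Omega_compact sigma_pos sigma_mono eps_nonneg eps_summable delta_nonneg delta_summable delta_lt1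
    unfolding Sol P_defs sigma_inf_def by simp
qed

end
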